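(* Let $M$ be a mode for a program $P$ such that $P$ is safe w.r.t. $M$ and $P$ satisfies $M$. Let $\mathit{Eqs}$ be a conjunction of equations and $G_0,G_1,G_2$ be goals, where no disequation occurs in $G_1$ and all derivations from the goal $(G_0,G_1)$ using $P$ are consistent with $M$. Then: (i) $(G_0,G_1,\mathit{Eqs},G_2)\longmapsto^*_P\mathit{true}$ iff $(G_0,\mathit{Eqs},G_1,G_2)\longmapsto^*_P\mathit{true}$; (ii) $\mu(P,(G_0,G_1,\mathit{Eqs},G_2))=\mu(P,(G_0,\mathit{Eqs},G_1,G_2))$; (iii) $\nu(P,(G_0,G_1,\mathit{Eqs},G_2))=\nu(P,(G_0,\mathit{Eqs},G_1,G_2))$.
   Context: Predicate symbols $\mathit{true}$, $=$, $\neq$ are basic, all others non-basic. Basic atoms: $\mathit{true}$, $t_1=t_2$ (equation), $t_1\neq t_2$ (disequation); non-basic atoms $p(t_1,\dots,t_m)$, $p$ non-basic. A goal is a conjunction of atoms ("," associative, neutral element $\mathit{true}$). A clause $C$ is $A\leftarrow G$ with non-basic head $hd(C)$ and body $bd(C)$; a program is a set of clauses. All mgu's are relevant and idempotent. A variable $X$ is a local variable of goal $G$ in clause $H\leftarrow G_1,G,G_2$ iff $X\in vars(G)-vars(H,G_1,G_2)$. Operational semantics: (1) $(t_1=t_2,G)\longmapsto_P G\vartheta$ if $t_1,t_2$ unify with mgu $\vartheta$; (2) $(t_1\neq t_2,G)\longmapsto_P G$ if not unifiable; (3) $(A,G)\longmapsto_P(bd(C),G)\vartheta$ if $A$ is non-basic,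 $C$ a renamed apart clause of $P$ and $\vartheta$ an mgu of $A$ and $hd(C)$. A derivation is $G_0\longmapsto_P\cdots\longmapsto_P G_z$, of length $z$; successful if $G_z=\mathit{true}$ (then $G_0$ succeeds). $\longmapsto^*_P$ is the reflexive-transitive closure. For a derivation $\delta$, $\lambda(\delta)$ is the number of goals $G_i$ in $\delta$ of the form $(A,K)$ with $A$ non-basic. $\mu(P,G)$ is the minimum of $\lambda(\delta)$ over successful derivations $\delta$ of $G$ in $P$, and $\infty$ if $G$ does not succeed; $\nu(P,G)$ is the minimum length of a successful derivation of $G$ in $P$, and $\infty$ if none. Modes: a mode for non-basic $p$ of arity $h$ is $p(m_1,\dots,m_h)$, $m_i\in\{+,?\}$; $t_i$ is an input argument iff $m_i=+$; variables in input arguments are input variables; a mode for a program contains exactly one mode per non-basic predicate occurring in it. An atom satisfies $M$ iff $M$ has a mode for its predicate and its input arguments are ground. $P$ satisfies $M$ iff for every non-basic $A_0$ satisfying $M$ and every non-basic $A$ and goal $G$ with $A_0\longmapsto^*_P(A,G)$, $A$ satisfies $M$. A derivation $G_0\longmapsto_P\cdots\longmapsto_P G_n$ is consistent with $M$ iff for $i<n$, whenever the leftmost atom of $G_i$ is a non-basic atom $A$, $A$ satisfies $M$. A clause $C$ is safe w.r.t. $M$ iff each variable of each disequation $t_1\neq t_2$ in $bd(C)$ is an input variable of $hd(C)$ or a local variable of $t_1\neq t_2$ in $C$; a program is safe iff all its clauses are. *)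

theory Defs
  imports Main "HOL-Library.Extended_Nat"
begin

datatype ('f, 'v) trm = Var 'v | Fn 'f "('f, 'v) trm list"

fun vars_trm :: "('f, 'v) trm \<Rightarrow> 'v set" where
  "vars_trm (Var x) = {x}"
| "vars_trm (Fn f ts) = (\<Union>t\<in>set ts. vars_trm t)"

definition ground :: "('f, 'v) trm \<Rightarrow> bool" where
  "ground t \<longleftrightarrow> vars_trm t = {}"

type_synonym ('f, 'v) subst = "'v \<Rightarrow> ('f, 'v) trm"

fun subst_trm :: "('f, 'v) subst \<Rightarrow> ('f, 'v) trm \<Rightarrow> ('f, 'v) trm" where
  "subst_trm \<sigma> (Var x) = \<sigma> x"
| "subst_trm \<sigma> (Fn f ts) = Fn f (map (subst_trm \<sigma>) ts)"

text \<open>Composition: first apply sigma, then tau.\<close>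
definition subst_comp :: "('f, 'v) subst \<Rightarrow> ('f, 'v) subst \<Rightarrow> ('f, 'v) subst" where
  "subst_comp \<sigma> \<tau> = (\<lambda>x. subst_trm \<tau> (\<sigma> x))"

definition sdom :: "('f, 'v) subst \<Rightarrow> 'v set" where
  "sdom \<sigma> = {x. \<sigma> x \<noteq> Var x}"

definition svran :: "('f, 'v) subst \<Rightarrow> 'v set" where
  "svran \<sigma> = (\<Union>x\<in>sdom \<sigma>. vars_trm (\<sigma> x))"

definition unifier :: "('f, 'v) subst \<Rightarrow> (('f, 'v) trm \<times> ('f, 'v) trm) set \<Rightarrow> bool" where
  "unifier \<sigma> E \<longleftrightarrow> (\<forall>(s, t)\<in>E. subst_trm \<sigma> s = subst_trm \<sigma> t)"

definition is_mgu :: "('f, 'v) subst \<Rightarrow> (('f, 'v) trm \<times> ('f, 'v) trm) set \<Rightarrow> bool" where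
  "is_mgu \<sigma> E \<longleftrightarrow> unifier \<sigma> E \<and> (\<forall>\<tau>. unifier \<tau> E \<longrightarrow> (\<exists>\<gamma>. \<tau> = subst_comp \<sigma> \<gamma>))"

definition relevant :: "('f, 'v) subst \<Rightarrow> (('f, 'v) trm \<times> ('f, 'v) trm) set \<Rightarrow> bool" where
  "relevant \<sigma> E \<longleftrightarrow> sdom \<sigma> \<union> svran \<sigma> \<subseteq> (\<Union>(s, t)\<in>E. vars_trm s \<union> vars_trm t)"

definition idempotent :: "('f, 'v) subst \<Rightarrow> bool" where
  "idempotent \<sigma> \<longleftrightarrow> subst_comp \<sigma> \<sigma> = \<sigma>"

definition good_mgu :: "('f, 'v) subst \<Rightarrow> (('f, 'v) trm \<times> ('f, 'v) trm) set \<Rightarrow> bool" where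
  "good_mgu \<sigma> E \<longleftrightarrow> is_mgu \<sigma> E \<and> relevant \<sigma> E \<and> idempotent \<sigma>"

text \<open>The basic atom true is the neutral element of goal conjunction; goals are
  represented as lists of atoms other than true (the empty list is the goal true).\<close>
datatype ('p, 'f, 'v) atom =
    Eq "('f, 'v) trm" "('f, 'v) trm"
  | Neq "('f, 'v) trm" "('f, 'v) trm"
  | Pred 'p "('f, 'v) trm list"

type_synonym ('p, 'f, 'v) goal = "('p, 'f, 'v) atom list"

fun is_eq :: "('p, 'f, 'v) atom \<Rightarrow> bool" where
  "is_eq (Eq _ _) = True" | "is_eq _ = False"

fun is_neq :: "('p, 'f, 'v) atom \<Rightarrow> bool" where
  "is_neq (Neq _ _) = True" | "is_neq _ = False"

fun nonbasic :: "('p, 'f, 'v) atom \<Rightarrow> bool" where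
  "nonbasic (Pred _ _) = True" | "nonbasic _ = False"

fun vars_atom :: "('p, 'f, 'v) atom \<Rightarrow> 'v set" where
  "vars_atom (Eq s t) = vars_trm s \<union> vars_trm t"
| "vars_atom (Neq s t) = vars_trm s \<union> vars_trm t"
| "vars_atom (Pred p ts) = (\<Union>t\<in>set ts. vars_trm t)"

definition vars_goal :: "('p, 'f, 'v) goal \<Rightarrow> 'v set" where
  "vars_goal G = (\<Union>a\<in>set G. vars_atom a)"

fun subst_atom :: "('f, 'v) subst \<Rightarrow> ('p, 'f, 'v) atom \<Rightarrow> ('p, 'f, 'v) atom" where
  "subst_atom \<sigma> (Eq s t) = Eq (subst_trm \<sigma> s) (subst_trm \<sigma> t)"
| "subst_atom \<sigma> (Neq s t) = Neq (subst_trm \<sigma> s) (subst_trm \<sigma> t)"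
| "subst_atom \<sigma> (Pred p ts) = Pred p (map (subst_trm \<sigma>) ts)"

definition subst_goal :: "('f, 'v) subst \<Rightarrow> ('p, 'f, 'v) goal \<Rightarrow> ('p, 'f, 'v) goal" where
  "subst_goal \<sigma> G = map (subst_atom \<sigma>) G"

datatype ('p, 'f, 'v) clause = Cl 'p "('f, 'v) trm list" "('p, 'f, 'v) goal"

fun hd_cl :: "('p, 'f, 'v) clause \<Rightarrow> ('p, 'f, 'v) atom" where
  "hd_cl (Cl p ts B) = Pred p ts"

fun bd_cl :: "('p, 'f, 'v) clause \<Rightarrow> ('p, 'f, 'v) goal" where
  "bd_cl (Cl p ts B) = B"

definition vars_clause :: "('p, 'f, 'v) clause \<Rightarrow> 'v set" where
  "vars_clause C = vars_atom (hd_cl C) \<union> vars_goal (bd_cl C)"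

fun rename_clause :: "('v \<Rightarrow> 'v) \<Rightarrow> ('p, 'f, 'v) clause \<Rightarrow> ('p, 'f, 'v) clause" where
  "rename_clause \<rho> (Cl p ts B) =
     Cl p (map (subst_trm (Var \<circ> \<rho>)) ts) (subst_goal (Var \<circ> \<rho>) B)"

type_synonym ('p, 'f, 'v) program = "('p, 'f, 'v) clause set"

inductive step :: "('p, 'f, 'v) program \<Rightarrow> ('p, 'f, 'v) goal \<Rightarrow> ('p, 'f, 'v) goal \<Rightarrow> bool"
  for P where
  step_eq: "good_mgu \<theta> {(t1, t2)} \<Longrightarrow> step P (Eq t1 t2 # G) (subst_goal \<theta> G)"
| step_neq: "\<not> (\<exists>\<sigma>. subst_trm \<sigma> t1 = subst_trm \<sigma> t2) \<Longrightarrow> step P (Neq t1 t2 # G) G"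
| step_res: "\<lbrakk> C0 \<in> P; bij \<rho>; rename_clause \<rho> C0 = Cl q us B;
              vars_clause (Cl q us B) \<inter> vars_goal (Pred p ts # G) = {};
              q = p; length ts = length us; good_mgu \<theta> (set (zip ts us)) \<rbrakk>
             \<Longrightarrow> step P (Pred p ts # G) (subst_goal \<theta> (B @ G))"

abbreviation steps :: "('p, 'f, 'v) program \<Rightarrow> ('p, 'f, 'v) goal \<Rightarrow> ('p, 'f, 'v) goal \<Rightarrow> bool" where
  "steps P \<equiv> (step P)\<^sup>*\<^sup>*"

text \<open>A derivation G_0 -> ... -> G_z is the nonempty list [G_0, ..., G_z]; its length is z.\<close>
definition derivation :: "('p, 'f, 'v) program \<Rightarrow> ('p, 'f, 'v) goal list \<Rightarrow> bool" where
  "derivation P ds \<longleftrightarrow> ds \<noteq> [] \<and> (\<forall>i. Suc i < length ds \<longrightarrow> step P (ds ! i) (ds ! Suc i))"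

definition successful_deriv :: "('p, 'f, 'v) program \<Rightarrow> ('p, 'f, 'v) goal \<Rightarrow> ('p, 'f, 'v) goal list \<Rightarrow> bool" where
  "successful_deriv P G ds \<longleftrightarrow> derivation P ds \<and> hd ds = G \<and> last ds = []"

fun leftmost_nonbasic :: "('p, 'f, 'v) goal \<Rightarrow> bool" where
  "leftmost_nonbasic [] = False"
| "leftmost_nonbasic (A # K) = nonbasic A"

definition lam :: "('p, 'f, 'v) goal list \<Rightarrow> nat" where
  "lam ds = card {i. i < length ds \<and> leftmost_nonbasic (ds ! i)}"

definition mu :: "('p, 'f, 'v) program \<Rightarrow> ('p, 'f, 'v) goal \<Rightarrow> enat" where
  "mu P G = (INF ds \<in> {ds. successful_deriv P G ds}. enat (lam ds))"

definition nu :: "('p, 'f, 'v) program \<Rightarrow> ('p, 'f, 'v) goal \<Rightarrow> enat" where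
  "nu P G = (INF ds \<in> {ds. successful_deriv P G ds}. enat (length ds - 1))"

text \<open>A mode assigns to a predicate symbol a list of flags (True = +, False = ?).\<close>
type_synonym 'p mode = "'p \<Rightarrow> bool list option"

fun sat_atom :: "'p mode \<Rightarrow> ('p, 'f, 'v) atom \<Rightarrow> bool" where
  "sat_atom M (Pred p ts) =
     (case M p of
        Some ms \<Rightarrow> length ms = length ts \<and> (\<forall>i<length ts. ms ! i \<longrightarrow> ground (ts ! i))
      | None \<Rightarrow> False)"
| "sat_atom M _ = False"

definition atoms_of_prog :: "('p, 'f, 'v) program \<Rightarrow> ('p, 'f, 'v) atom set" where
  "atoms_of_prog P = (\<Union>C\<in>P. insert (hd_cl C) (set (bd_cl C)))"

definition mode_for :: "'p mode \<Rightarrow> ('p, 'f, 'v) program \<Rightarrow> bool" where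
  "mode_for M P \<longleftrightarrow>
     (\<forall>p ts. Pred p ts \<in> atoms_of_prog P \<longrightarrow> (\<exists>ms. M p = Some ms \<and> length ms = length ts))"

definition prog_satisfies :: "('p, 'f, 'v) program \<Rightarrow> 'p mode \<Rightarrow> bool" where
  "prog_satisfies P M \<longleftrightarrow>
     (\<forall>A0 A G. nonbasic A0 \<and> sat_atom M A0 \<and> nonbasic A \<and> steps P [A0] (A # G)
        \<longrightarrow> sat_atom M A)"

definition consistent :: "'p mode \<Rightarrow> ('p, 'f, 'v) goal list \<Rightarrow> bool" where
  "consistent M ds \<longleftrightarrow>
     (\<forall>i A K. Suc i < length ds \<and> ds ! i = A # K \<and> nonbasic A \<longrightarrow> sat_atom M A)"

fun input_vars :: "'p mode \<Rightarrow> ('p, 'f, 'v) atom \<Rightarrow> 'v set" where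
  "input_vars M (Pred p ts) =
     (\<Union>i\<in>{i. i < length ts \<and> (case M p of Some ms \<Rightarrow> i < length ms \<and> ms ! i | None \<Rightarrow> False)}.
        vars_trm (ts ! i))"
| "input_vars M _ = {}"

definition local_var_of :: "('p, 'f, 'v) clause \<Rightarrow> nat \<Rightarrow> 'v \<Rightarrow> bool" where
  "local_var_of C i X \<longleftrightarrow>
     i < length (bd_cl C) \<and> X \<in> vars_atom (bd_cl C ! i) \<and>
     X \<notin> vars_atom (hd_cl C) \<union> vars_goal (take i (bd_cl C)) \<union> vars_goal (drop (Suc i) (bd_cl C))"

definition safe_clause :: "'p mode \<Rightarrow> ('p, 'f, 'v) clause \<Rightarrow> bool" where
  "safe_clause M C \<longleftrightarrow>
     (\<forall>i t1 t2. i < length (bd_cl C) \<and> bd_cl C ! i = Neq t1 t2 \<longrightarrow>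
        (\<forall>X \<in> vars_trm t1 \<union> vars_trm t2. X \<in> input_vars M (hd_cl C) \<or> local_var_of C i X))"

definition safe_prog :: "'p mode \<Rightarrow> ('p, 'f, 'v) program \<Rightarrow> bool" where
  "safe_prog M P \<longleftrightarrow> (\<forall>C\<in>P. safe_clause M C)"

end

theory Submission
  imports Defs
begin

text \<open>
  Successful derivations are recorded with their length and their number of goals with a
  non-basic leftmost atom (\<open>succeeds P G n k\<close>); it suffices to show that both goals admit the
  same such pairs. A block of equations can be moved across a single atom \<open>A\<close>: performing the step
  on \<open>A\<close> and then solving the equations, or solving the equations by an mgu \<open>\<sigma>\<close> and then
  performing the step on \<open>\<sigma>A\<close>, gives the same counters, because both orders compute mgus of the same
  union of equation sets, and two mgus of the same set differ by a renaming (clauses can be renamed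
  apart from the equations since there are infinitely many variables). A disequation \<open>A\<close> must in
  addition share no variable with the equations. This holds for the disequations of \<open>G1\<close> along
  every derivation: initially there are none, and by safety and consistency with the mode every
  variable of a disequation taken from a clause body is either ground after unification or local
  to that disequation. Induction on the length of derivations then moves the equations past \<open>G1\<close>
  one atom at a time.
\<close>

lemma subst_trm_Var [simp]: "subst_trm Var t = t"
  by (induction t) (auto simp: map_idI)

lemma vars_subst_trm: "vars_trm (subst_trm \<sigma> t) = (\<Union>x\<in>vars_trm t. vars_trm (\<sigma> x))"
  by (induction t) auto

lemma subst_comp_apply [simp]: "subst_trm (subst_comp \<sigma> \<tau>) t = subst_trm \<tau> (subst_trm \<sigma> t)"
  by (induction t) (auto simp: subst_comp_def)

lemma subst_trm_cong: "(\<And>x. x \<in> vars_trm t \<Longrightarrow> \<sigma> x = \<tau> x) \<Longrightarrow> subst_trm \<sigma> t = subst_trm \<tau> t"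
  by (induction t) auto

lemma subst_trm_id: "(\<And>x. x \<in> vars_trm t \<Longrightarrow> \<sigma> x = Var x) \<Longrightarrow> subst_trm \<sigma> t = t"
  using subst_trm_cong[of t \<sigma> Var] by simp

lemma subst_comp_assoc: "subst_comp (subst_comp \<sigma> \<tau>) \<upsilon> = subst_comp \<sigma> (subst_comp \<tau> \<upsilon>)"
  by (simp add: subst_comp_def fun_eq_iff flip: subst_comp_apply)

lemma subst_comp_Var_left [simp]: "subst_comp Var \<sigma> = \<sigma>"
  and subst_comp_Var_right [simp]: "subst_comp \<sigma> Var = \<sigma>"
  by (auto simp: subst_comp_def)

lemma finite_vars_trm [simp]: "finite (vars_trm t)"
  by (induction t) auto

lemma ground_subst_trm: "ground t \<Longrightarrow> subst_trm \<sigma> t = t"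
  by (rule subst_trm_id) (auto simp: ground_def)

lemma vars_subst_apply: "vars_trm (\<sigma> z) \<subseteq> (if z \<in> sdom \<sigma> then svran \<sigma> else {z})"
  by (auto simp: sdom_def svran_def)

lemma idempotent_subst_trm: "idempotent \<theta> \<Longrightarrow> subst_trm \<theta> (subst_trm \<theta> u) = subst_trm \<theta> u"
  by (metis idempotent_def subst_comp_apply)

lemma size_subst_occurs:
  "x \<in> vars_trm t \<Longrightarrow> size (\<sigma> x) \<le> size (subst_trm \<sigma> t) \<and> (t \<noteq> Var x \<longrightarrow> size (\<sigma> x) < size (subst_trm \<sigma> t))"
proof (induction t)
  case (Fn f ts)
  then obtain u where u: "u \<in> set ts" "x \<in> vars_trm u" by auto
  have "size (\<sigma> x) \<le> size (subst_trm \<sigma> u)" using Fn.IH[OF u] by auto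
  moreover have "size (subst_trm \<sigma> u) \<le> size_list size (map (subst_trm \<sigma>) ts)"
    using u(1) by (intro size_list_estimation') auto
  ultimately show ?case by auto
qed auto

lemma occurs_check: "x \<in> vars_trm t \<Longrightarrow> t \<noteq> Var x \<Longrightarrow> \<sigma> x \<noteq> subst_trm \<sigma> t"
  using size_subst_occurs[of x t \<sigma>] by auto

section \<open>Most general unifiers\<close>

abbreviation vars_pairs :: "(('f, 'v) trm \<times> ('f, 'v) trm) set \<Rightarrow> 'v set" where
  "vars_pairs E \<equiv> (\<Union>(s, t)\<in>E. vars_trm s \<union> vars_trm t)"

definition subst_pairs ::
  "('f, 'v) subst \<Rightarrow> (('f, 'v) trm \<times> ('f, 'v) trm) list \<Rightarrow> (('f, 'v) trm \<times> ('f, 'v) trm) list" where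
  "subst_pairs \<sigma> L = map (\<lambda>(a, b). (subst_trm \<sigma> a, subst_trm \<sigma> b)) L"

definition size_pairs :: "(('f, 'v) trm \<times> ('f, 'v) trm) list \<Rightarrow> nat" where
  "size_pairs L = sum_list (map (\<lambda>(a, b). size a + size b) L)"

lemma subst_pairs_Nil [simp]: "subst_pairs \<sigma> [] = []"
  and subst_pairs_Cons [simp]: "subst_pairs \<sigma> ((s, t) # L) = (subst_trm \<sigma> s, subst_trm \<sigma> t) # subst_pairs \<sigma> L"
  by (simp_all add: subst_pairs_def)

lemma subst_pairs_Var [simp]: "subst_pairs Var L = L"
  by (simp add: subst_pairs_def case_prod_beta)

lemma length_subst_pairs [simp]: "length (subst_pairs \<sigma> L) = length L"
  by (simp add: subst_pairs_def)

lemma subst_pairs_zip: "subst_pairs \<sigma> (zip ss ts) = zip (map (subst_trm \<sigma>) ss) (map (subst_trm \<sigma>) ts)"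
  by (simp add: subst_pairs_def zip_map_map)

lemma unifier_empty [simp]: "unifier \<sigma> {}"
  by (simp add: unifier_def)

lemma unifier_insert [simp]:
  "unifier \<tau> (insert (s, t) E) \<longleftrightarrow> subst_trm \<tau> s = subst_trm \<tau> t \<and> unifier \<tau> E"
  by (auto simp: unifier_def)

lemma unifier_union: "unifier \<tau> (A \<union> B) \<longleftrightarrow> unifier \<tau> A \<and> unifier \<tau> B"
  by (auto simp: unifier_def)

lemma unifier_subst_pairs: "unifier \<tau> (set (subst_pairs \<sigma> L)) \<longleftrightarrow> unifier (subst_comp \<sigma> \<tau>) (set L)"
  by (auto simp: unifier_def subst_pairs_def)

lemma unifier_zip:
  "length ss = length ts \<Longrightarrow> unifier \<tau> (set (zip ss ts)) \<longleftrightarrow> map (subst_trm \<tau>) ss = map (subst_trm \<tau>) ts"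
  by (induction ss ts rule: list_induct2) auto

lemma vars_pairs_zip:
  "length ss = length ts \<Longrightarrow> vars_pairs (set (zip ss ts)) = (\<Union>u\<in>set ss. vars_trm u) \<union> (\<Union>u\<in>set ts. vars_trm u)"
  by (induction ss ts rule: list_induct2) auto

lemma vars_pairs_subst_pairs:
  "vars_pairs (set (subst_pairs \<sigma> L)) = (\<Union>(a, b)\<in>set L. vars_trm (subst_trm \<sigma> a) \<union> vars_trm (subst_trm \<sigma> b))"
  by (auto simp: subst_pairs_def)

lemma vars_pairs_elim:
  "vars_pairs (set (subst_pairs (Var(x := u)) L)) \<subseteq> (vars_pairs (set L) - {x}) \<union> vars_trm u"
proof -
  have "vars_trm (subst_trm (Var(x := u)) a) \<subseteq> (vars_trm a - {x}) \<union> vars_trm u" for a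
    by (auto simp: vars_subst_trm split: if_splits)
  then show ?thesis unfolding vars_pairs_subst_pairs by fastforce
qed

lemma is_mgu_unifier: "is_mgu \<theta> E \<Longrightarrow> unifier \<theta> E"
  by (simp add: is_mgu_def)

lemma good_mgu_is_mgu: "good_mgu \<theta> E \<Longrightarrow> is_mgu \<theta> E"
  by (simp add: good_mgu_def)

lemma good_mgu_cong:
  assumes "good_mgu \<theta> E'" "vars_pairs E' \<subseteq> vars_pairs E" "\<And>\<tau>. unifier \<tau> E \<longleftrightarrow> unifier \<tau> E'"
  shows "good_mgu \<theta> E"
  using assms unfolding good_mgu_def is_mgu_def relevant_def by blast

lemma good_mgu_Var_empty: "good_mgu Var {}"
  by (simp add: good_mgu_def is_mgu_def relevant_def idempotent_def sdom_def svran_def)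

lemma is_mgu_elim:
  fixes x :: 'v and t :: "('f, 'v) trm"
  defines "\<eta> \<equiv> Var(x := t)"
  assumes xt: "x \<notin> vars_trm t" and mgu: "is_mgu \<theta>' (set (subst_pairs \<eta> L))"
  shows "is_mgu (subst_comp \<eta> \<theta>') (set ((Var x, t) # L))"
  unfolding is_mgu_def
proof (intro conjI allI impI)
  have "subst_trm \<eta> t = t"
    using xt by (intro subst_trm_id) (auto simp: \<eta>_def)
  then show "unifier (subst_comp \<eta> \<theta>') (set ((Var x, t) # L))"
    using is_mgu_unifier[OF mgu] by (simp add: unifier_subst_pairs) (simp add: subst_comp_def \<eta>_def)
next
  fix \<tau> assume "unifier \<tau> (set ((Var x, t) # L))"
  then have tx: "\<tau> x = subst_trm \<tau> t" and uL: "unifier \<tau> (set L)" by auto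
  have \<tau>: "subst_comp \<eta> \<tau> = \<tau>" using tx by (auto simp: subst_comp_def \<eta>_def)
  have "unifier \<tau> (set (subst_pairs \<eta> L))" using uL \<tau> by (simp add: unifier_subst_pairs)
  then obtain \<gamma> where "\<tau> = subst_comp \<theta>' \<gamma>" using mgu by (auto simp: is_mgu_def)
  then show "\<exists>\<gamma>. \<tau> = subst_comp (subst_comp \<eta> \<theta>') \<gamma>" using \<tau> by (metis subst_comp_assoc)
qed

lemma good_mgu_elim:
  fixes x :: 'v and t :: "('f, 'v) trm"
  defines "\<eta> \<equiv> Var(x := t)"
  assumes xt: "x \<notin> vars_trm t" and good: "good_mgu \<theta>' (set (subst_pairs \<eta> L))"
  shows "good_mgu (subst_comp \<eta> \<theta>') (set ((Var x, t) # L))"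
proof -
  define \<theta> where "\<theta> = subst_comp \<eta> \<theta>'"
  have rel': "sdom \<theta>' \<union> svran \<theta>' \<subseteq> vars_pairs (set (subst_pairs \<eta> L))"
    and idem': "idempotent \<theta>'" using good by (auto simp: good_mgu_def relevant_def)
  have elim: "vars_pairs (set (subst_pairs \<eta> L)) \<subseteq> (vars_pairs (set L) - {x}) \<union> vars_trm t"
    unfolding \<eta>_def by (rule vars_pairs_elim)
  then have "x \<notin> sdom \<theta>' \<union> svran \<theta>'" using rel' xt by blast
  then have x_fresh: "x \<notin> vars_trm (\<theta>' z)" if "z \<noteq> x" for z
    using vars_subst_apply[of \<theta>' z] that by (auto split: if_splits)
  have \<theta>_x: "\<theta> x = subst_trm \<theta>' t" and \<theta>_other: "y \<noteq> x \<Longrightarrow> \<theta> y = \<theta>' y" for y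
    by (simp_all add: \<theta>_def subst_comp_def \<eta>_def)
  have "x \<notin> vars_trm (\<theta> y)" for y
    using xt x_fresh by (cases "y = x") (force simp: \<theta>_x \<theta>_other vars_subst_trm)+
  then have \<eta>_fixes: "subst_trm \<eta> (\<theta> y) = \<theta> y" for y
    by (intro subst_trm_id) (auto simp: \<eta>_def)
  have "subst_trm \<theta> (\<theta> y) = \<theta> y" for y
  proof -
    have "subst_trm \<theta> (\<theta> y) = subst_trm \<theta>' (subst_trm \<eta> (\<theta> y))" by (simp add: \<theta>_def)
    also have "\<dots> = subst_trm \<theta>' (\<theta> y)" by (simp only: \<eta>_fixes)
    also have "\<dots> = \<theta> y" using idempotent_subst_trm[OF idem'] by (simp add: \<theta>_def subst_comp_def)
    finally show ?thesis .
  qed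
  then have "idempotent \<theta>" by (simp add: idempotent_def subst_comp_def fun_eq_iff)
  moreover have "sdom \<theta> \<subseteq> insert x (sdom \<theta>')"
    by (auto simp: sdom_def \<theta>_x \<theta>_other)
  moreover have "svran \<theta> \<subseteq> vars_trm t \<union> svran \<theta>'"
  proof -
    have "vars_trm (\<theta> y) \<subseteq> vars_trm t \<union> svran \<theta>'" if "y \<in> sdom \<theta>" for y
    proof (cases "y = x")
      case True
      then show ?thesis
        using vars_subst_apply[of \<theta>'] by (fastforce simp: \<theta>_x vars_subst_trm split: if_splits)
    next
      case False
      then show ?thesis using that by (auto simp: \<theta>_other svran_def sdom_def)
    qed
    then show ?thesis by (auto simp: svran_def)
  qed
  ultimately show ?thesis
    using is_mgu_elim[OF xt good_mgu_is_mgu[OF good[unfolded \<eta>_def]]] rel' elim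
    unfolding good_mgu_def relevant_def \<theta>_def \<eta>_def by fastforce
qed

lemma size_pairs_zip_le: "size_pairs (zip ss ts) \<le> size_list size ss + size_list size ts"
proof (induction ss arbitrary: ts)
  case (Cons s ss)
  show ?case
  proof (cases ts)
    case (Cons t ts')
    then show ?thesis using Cons.IH[of ts'] by (simp add: size_pairs_def)
  qed (simp add: size_pairs_def)
qed (simp add: size_pairs_def)

lemma finite_vars_pairs: "finite (vars_pairs (set L))"
  by auto

lemma unifier_elim:
  "\<sigma> x = subst_trm \<sigma> u \<Longrightarrow> unifier \<sigma> (set L) \<Longrightarrow> unifier \<sigma> (set (subst_pairs (Var(x := u)) L))"
proof -
  assume "\<sigma> x = subst_trm \<sigma> u" "unifier \<sigma> (set L)"
  moreover from this(1) have "subst_comp (Var(x := u)) \<sigma> = \<sigma>" by (auto simp: subst_comp_def)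
  ultimately show ?thesis by (simp add: unifier_subst_pairs)
qed

lemma vars_pairs_elim_psubset:
  "x \<notin> vars_trm u \<Longrightarrow> vars_pairs (set (subst_pairs (Var(x := u)) L)) \<subset> vars_pairs (set ((Var x, u) # L))"
  using vars_pairs_elim[of x u L] by auto

lemma unifier_decompose:
  "length ss = length ts \<Longrightarrow>
    unifier \<tau> (set ((Fn f ss, Fn f ts) # L)) \<longleftrightarrow> unifier \<tau> (set (zip ss ts @ L))"
  using unifier_zip[of ss ts \<tau>] by (simp add: unifier_union)

lemma size_pairs_decompose: "size_pairs (zip ss ts @ L) < size_pairs ((Fn f ss, Fn g ts) # L)"
  using size_pairs_zip_le[of ss ts] by (simp add: size_pairs_def)

lemma good_mgu_exists: "unifier \<sigma> (set L) \<Longrightarrow> \<exists>\<theta>. good_mgu \<theta> (set L)"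
proof (induction L arbitrary: \<sigma>
    rule: wf_induct_rule[OF wf_measures[of "[\<lambda>L. card (vars_pairs (set L)), size_pairs]"]])
  case (1 L)
  let ?less = "\<lambda>L'. (L', L) \<in> measures [\<lambda>L. card (vars_pairs (set L)), size_pairs]"
  have elim: "\<exists>\<theta>. good_mgu \<theta> (set ((Var x, u) # L'))"
    if xu: "x \<notin> vars_trm u" and \<sigma>x: "\<sigma> x = subst_trm \<sigma> u" and uL': "unifier \<sigma> (set L')"
      and vars: "vars_pairs (set ((Var x, u) # L')) = vars_pairs (set L)" for x u L'
  proof -
    have "card (vars_pairs (set (subst_pairs (Var(x := u)) L'))) < card (vars_pairs (set L))"
      using psubset_card_mono[OF finite_vars_pairs vars_pairs_elim_psubset[OF xu, of L']] unfolding vars .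
    then have "?less (subst_pairs (Var(x := u)) L')" by simp
    then obtain \<theta>' where "good_mgu \<theta>' (set (subst_pairs (Var(x := u)) L'))"
      using "1.IH" unifier_elim[OF \<sigma>x uL'] by blast
    then show ?thesis using good_mgu_elim[OF xu] by blast
  qed
  show ?case
  proof (cases L)
    case Nil
    then show ?thesis using good_mgu_Var_empty by auto
  next
    case (Cons p L')
    obtain s t where L: "L = (s, t) # L'" using Cons by (cases p) auto
    have st: "subst_trm \<sigma> s = subst_trm \<sigma> t" and uL': "unifier \<sigma> (set L')"
      using "1.prems" L by simp_all
    consider (eq) "s = t" | (var_l) x where "s = Var x" "s \<noteq> t" | (var_r) f ss x where "s = Fn f ss" "t = Var x"
      | (fn) f ss g ts where "s = Fn f ss" "t = Fn g ts"
      by (metis trm.exhaust)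
    then show ?thesis
    proof cases
      case eq
      have sub: "vars_pairs (set L') \<subseteq> vars_pairs (set L)" using L by auto
      then have "card (vars_pairs (set L')) \<le> card (vars_pairs (set L))"
        by (rule card_mono[OF finite_vars_pairs])
      moreover have "size_pairs L' < size_pairs L" using L by (cases s) (auto simp: size_pairs_def)
      ultimately have "?less L'" by (auto intro: measures_lesseq measures_less)
      then obtain \<theta> where \<theta>: "good_mgu \<theta> (set L')" using "1.IH" uL' by blast
      have "good_mgu \<theta> (set L)" by (rule good_mgu_cong[OF \<theta> sub]) (use L eq in auto)
      then show ?thesis by blast
    next
      case var_l
      have "x \<notin> vars_trm t" using occurs_check[of x t \<sigma>] st var_l by auto
      then show ?thesis using elim[of x t L'] st uL' by (simp add: var_l L)
    next
      case var_r
      have "x \<notin> vars_trm s" using occurs_check[of x s \<sigma>] st var_r by auto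
      then obtain \<theta> where \<theta>: "good_mgu \<theta> (set ((Var x, s) # L'))"
        using elim[of x s L'] st uL' by (auto simp: var_r L Un_ac)
      have "good_mgu \<theta> (set L)" by (rule good_mgu_cong[OF \<theta>]) (auto simp: var_r L)
      then show ?thesis by blast
    next
      case fn
      have "f = g" and len: "length ss = length ts"
        using st fn by (auto dest: map_eq_imp_length_eq)
      then have unif: "unifier \<tau> (set L) \<longleftrightarrow> unifier \<tau> (set (zip ss ts @ L'))" for \<tau>
        using unifier_decompose L fn by simp
      have vars: "vars_pairs (set (zip ss ts @ L')) = vars_pairs (set L)"
        using vars_pairs_zip[OF len] L fn by auto
      then have "?less (zip ss ts @ L')" using size_pairs_decompose L fn by (simp add: measures_less)
      then obtain \<theta> where \<theta>: "good_mgu \<theta> (set (zip ss ts @ L'))" using "1.IH" "1.prems" unif by blast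
      have "good_mgu \<theta> (set L)" by (rule good_mgu_cong[OF \<theta>]) (use vars unif in auto)
      then show ?thesis by blast
    qed
  qed
qed

lemma is_mgu_comp:
  assumes "is_mgu \<theta>1 E" "is_mgu \<theta>2 (set (subst_pairs \<theta>1 L))"
  shows "is_mgu (subst_comp \<theta>1 \<theta>2) (E \<union> set L)"
  unfolding is_mgu_def unifier_union
proof (intro conjI allI impI)
  show "unifier (subst_comp \<theta>1 \<theta>2) E"
    using is_mgu_unifier[OF assms(1)] by (auto simp: unifier_def)
  show "unifier (subst_comp \<theta>1 \<theta>2) (set L)"
    using is_mgu_unifier[OF assms(2)] by (simp add: unifier_subst_pairs)
next
  fix \<tau> assume \<tau>: "unifier \<tau> E \<and> unifier \<tau> (set L)"
  then obtain \<gamma> where \<gamma>: "\<tau> = subst_comp \<theta>1 \<gamma>" using assms(1) by (auto simp: is_mgu_def)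
  then have "unifier \<gamma> (set (subst_pairs \<theta>1 L))" using \<tau> by (simp add: unifier_subst_pairs)
  then obtain \<delta> where "\<gamma> = subst_comp \<theta>2 \<delta>" using assms(2) by (auto simp: is_mgu_def)
  then show "\<exists>\<delta>. \<tau> = subst_comp (subst_comp \<theta>1 \<theta>2) \<delta>" using \<gamma> by (auto simp: subst_comp_assoc)
qed

lemma good_mgu_exists_after_mgu:
  assumes "is_mgu \<sigma> E" "unifier \<tau> (E \<union> set L)"
  shows "\<exists>\<theta>. good_mgu \<theta> (set (subst_pairs \<sigma> L))"
proof -
  obtain \<gamma> where "\<tau> = subst_comp \<sigma> \<gamma>" using assms by (auto simp: is_mgu_def unifier_union)
  then have "unifier \<gamma> (set (subst_pairs \<sigma> L))" using assms(2) by (simp add: unifier_subst_pairs unifier_union)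
  then show ?thesis by (rule good_mgu_exists)
qed

definition confined :: "('f, 'v) subst \<Rightarrow> 'v set \<Rightarrow> bool" where
  "confined \<sigma> V \<longleftrightarrow> (\<forall>x. x \<notin> V \<longrightarrow> \<sigma> x = Var x) \<and> (\<forall>x\<in>V. vars_trm (\<sigma> x) \<subseteq> V)"

definition untouched :: "('f, 'v) subst \<Rightarrow> 'v \<Rightarrow> bool" where
  "untouched \<sigma> x \<longleftrightarrow> \<sigma> x = Var x \<and> (\<forall>y. x \<in> vars_trm (\<sigma> y) \<longrightarrow> y = x)"

lemma good_mgu_confined:
  assumes "good_mgu \<theta> E"
  shows "confined \<theta> (vars_pairs E)"
proof -
  have rel: "sdom \<theta> \<union> svran \<theta> \<subseteq> vars_pairs E" using assms by (simp add: good_mgu_def relevant_def)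
  then have "\<theta> x = Var x" if "x \<notin> vars_pairs E" for x
    using that by (auto simp: sdom_def)
  moreover have "vars_trm (\<theta> x) \<subseteq> vars_pairs E" if "x \<in> vars_pairs E" for x
    using that rel vars_subst_apply[of \<theta> x] by (auto split: if_splits)
  ultimately show ?thesis by (simp add: confined_def)
qed

lemma confined_vars_apply: "confined \<sigma> V \<Longrightarrow> vars_trm (\<sigma> z) \<subseteq> insert z V"
  by (cases "z \<in> V") (auto simp: confined_def)

lemma confined_subst_trm_id: "confined \<sigma> V \<Longrightarrow> vars_trm t \<inter> V = {} \<Longrightarrow> subst_trm \<sigma> t = t"
  by (rule subst_trm_id) (auto simp: confined_def)

lemma confined_untouched: "confined \<sigma> V \<Longrightarrow> x \<notin> V \<Longrightarrow> untouched \<sigma> x"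
proof -
  assume "confined \<sigma> V" "x \<notin> V"
  then show ?thesis using confined_vars_apply[of \<sigma> V] by (auto simp: untouched_def confined_def)
qed

lemma untouched_Var: "untouched Var x"
  by (simp add: untouched_def)

lemma untouched_in_vars_image:
  "untouched \<sigma> x \<Longrightarrow> x \<in> (\<Union>z\<in>A. vars_trm (\<sigma> z)) \<longleftrightarrow> x \<in> A"
  unfolding untouched_def by (auto, metis singletonI vars_trm.simps(1))

lemma untouched_subst_trm_id: "(\<And>x. x \<in> vars_trm t \<Longrightarrow> untouched \<theta> x) \<Longrightarrow> subst_trm \<theta> t = t"
  by (rule subst_trm_id) (auto simp: untouched_def)

lemma subst_atom_Var [simp]: "subst_atom Var a = a"
  by (cases a) (auto simp: map_idI)

lemma subst_goal_Var [simp]: "subst_goal Var G = G"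
  by (simp add: subst_goal_def map_idI)

lemma subst_goal_Nil [simp]: "subst_goal \<sigma> [] = []"
  and subst_goal_Cons [simp]: "subst_goal \<sigma> (a # G) = subst_atom \<sigma> a # subst_goal \<sigma> G"
  and subst_goal_append [simp]: "subst_goal \<sigma> (G @ H) = subst_goal \<sigma> G @ subst_goal \<sigma> H"
  by (simp_all add: subst_goal_def)

lemma subst_atom_comp [simp]: "subst_atom (subst_comp \<sigma> \<tau>) a = subst_atom \<tau> (subst_atom \<sigma> a)"
  by (cases a) auto

lemma subst_goal_comp [simp]: "subst_goal (subst_comp \<sigma> \<tau>) G = subst_goal \<tau> (subst_goal \<sigma> G)"
  by (simp add: subst_goal_def)

lemma vars_goal_Nil [simp]: "vars_goal [] = {}"
  and vars_goal_Cons [simp]: "vars_goal (a # G) = vars_atom a \<union> vars_goal G"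
  and vars_goal_append [simp]: "vars_goal (G @ H) = vars_goal G \<union> vars_goal H"
  by (simp_all add: vars_goal_def)

lemma nonbasic_subst_atom [simp]: "nonbasic (subst_atom \<sigma> a) = nonbasic a"
  by (cases a) auto

lemma leftmost_nonbasic_subst_goal [simp]: "leftmost_nonbasic (subst_goal \<sigma> G) = leftmost_nonbasic G"
  by (cases G) auto

lemma finite_vars_atom [simp]: "finite (vars_atom a)"
  by (cases a) auto

lemma finite_vars_goal [simp]: "finite (vars_goal G)"
  by (induction G) auto

lemma vars_subst_atom: "vars_atom (subst_atom \<sigma> a) = (\<Union>x\<in>vars_atom a. vars_trm (\<sigma> x))"
  by (cases a) (auto simp: vars_subst_trm)

lemma vars_subst_goal: "vars_goal (subst_goal \<sigma> G) = (\<Union>x\<in>vars_goal G. vars_trm (\<sigma> x))"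
  by (induction G) (auto simp: vars_subst_atom)

lemma subst_goal_cong: "(\<And>x. x \<in> vars_goal G \<Longrightarrow> \<sigma> x = \<tau> x) \<Longrightarrow> subst_goal \<sigma> G = subst_goal \<tau> G"
proof (induction G)
  case (Cons a G)
  have "subst_atom \<sigma> a = subst_atom \<tau> a"
    using Cons.prems by (cases a) (auto intro: subst_trm_cong)
  then show ?case using Cons by simp
qed simp

lemma subst_goal_id: "(\<And>x. x \<in> vars_goal G \<Longrightarrow> \<sigma> x = Var x) \<Longrightarrow> subst_goal \<sigma> G = G"
  using subst_goal_cong[of G \<sigma> Var] by simp

lemma confined_vars_subst_goal: "confined \<sigma> V \<Longrightarrow> vars_goal (subst_goal \<sigma> G) \<subseteq> vars_goal G \<union> V"
  using confined_vars_apply[of \<sigma> V] unfolding vars_subst_goal by blast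

lemma confined_subst_goal_id: "confined \<sigma> V \<Longrightarrow> vars_goal G \<inter> V = {} \<Longrightarrow> subst_goal \<sigma> G = G"
  by (rule subst_goal_id) (auto simp: confined_def)

lemma confined_subst_atom_id: "confined \<sigma> V \<Longrightarrow> vars_atom a \<inter> V = {} \<Longrightarrow> subst_atom \<sigma> a = a"
  using confined_subst_goal_id[of \<sigma> V "[a]"] by simp

lemma untouched_in_vars_subst_goal:
  "untouched \<sigma> x \<Longrightarrow> x \<in> vars_goal (subst_goal \<sigma> G) \<longleftrightarrow> x \<in> vars_goal G"
  unfolding vars_subst_goal by (rule untouched_in_vars_image)

section \<open>Renamings and variants\<close>

lemma finite_inj_on_extend_bij:
  fixes f :: "'a \<Rightarrow> 'a"
  assumes fin: "finite V" and inj: "inj_on f V"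
  obtains \<rho> where "bij \<rho>" "\<And>x. x \<in> V \<Longrightarrow> \<rho> x = f x"
proof -
  define W where "W = f ` V"
  have finW: "finite W" using fin by (simp add: W_def)
  have "card W = card V" using inj by (simp add: W_def card_image)
  then have "card (W - V) = card (V - W)"
    using fin finW by (simp add: card_Diff_subset_Int Int_commute)
  then obtain h where h: "bij_betw h (W - V) (V - W)"
    using finite_same_card_bij[of "W - V" "V - W"] fin finW by auto
  have bf: "bij_betw f V W" using inj by (simp add: W_def bij_betw_def)
  define g where "g = (\<lambda>x. if x \<in> V then f x else h x)"
  have "bij_betw g (V \<union> (W - V)) (W \<union> (V - W))"
    unfolding g_def by (rule bij_betw_disjoint_Un[OF bf h]) auto
  moreover have "V \<union> (W - V) = V \<union> W" "W \<union> (V - W) = V \<union> W" by auto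
  ultimately have bg: "bij_betw g (V \<union> W) (V \<union> W)" by simp
  define \<rho> where "\<rho> = (\<lambda>x. if x \<in> V \<union> W then g x else x)"
  have "bij_betw \<rho> ((V \<union> W) \<union> - (V \<union> W)) ((V \<union> W) \<union> - (V \<union> W))"
    unfolding \<rho>_def by (rule bij_betw_disjoint_Un[OF bg]) (auto simp: bij_betw_def)
  then have "bij \<rho>" unfolding Compl_partition .
  moreover have "\<rho> x = f x" if "x \<in> V" for x using that by (simp add: \<rho>_def g_def)
  ultimately show ?thesis using that by blast
qed

lemma subst_trm_inverse_Var:
  "subst_trm \<gamma>2 (subst_trm \<gamma>1 t) = t \<Longrightarrow> z \<in> vars_trm t \<Longrightarrow> \<exists>w. \<gamma>1 z = Var w \<and> \<gamma>2 w = Var z"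
proof (induction t)
  case (Var y)
  then show ?case by (cases "\<gamma>1 y") auto
next
  case (Fn f ts)
  then obtain u where u: "u \<in> set ts" "z \<in> vars_trm u" by auto
  have "map (\<lambda>u. subst_trm \<gamma>2 (subst_trm \<gamma>1 u)) ts = map (\<lambda>u. u) ts"
    using Fn.prems(1) by (simp add: comp_def)
  then have "subst_trm \<gamma>2 (subst_trm \<gamma>1 u) = u" using u(1) unfolding map_eq_conv by blast
  then show ?case using Fn.IH u by blast
qed

lemma is_mgu_variant:
  assumes m1: "is_mgu \<phi>1 E" and m2: "is_mgu \<phi>2 E"
  obtains \<rho> where "bij \<rho>" "subst_goal \<phi>2 G = subst_goal (Var \<circ> \<rho>) (subst_goal \<phi>1 G)"
proof -
  obtain \<gamma>1 where g1: "\<phi>2 = subst_comp \<phi>1 \<gamma>1" using m1 is_mgu_unifier[OF m2] by (auto simp: is_mgu_def)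
  obtain \<gamma>2 where g2: "\<phi>1 = subst_comp \<phi>2 \<gamma>2" using m2 is_mgu_unifier[OF m1] by (auto simp: is_mgu_def)
  have inv: "subst_trm \<gamma>2 (subst_trm \<gamma>1 (\<phi>1 y)) = \<phi>1 y" for y
    using fun_cong[OF g2, of y] g1 by (simp add: subst_comp_def)
  define V where "V = vars_goal (subst_goal \<phi>1 G)"
  have ren: "\<exists>w. \<gamma>1 z = Var w \<and> \<gamma>2 w = Var z" if zV: "z \<in> V" for z
  proof -
    obtain y where "z \<in> vars_trm (\<phi>1 y)" using zV unfolding V_def vars_subst_goal by blast
    then show ?thesis using subst_trm_inverse_Var[OF inv] by blast
  qed
  define f where "f = (\<lambda>z. case \<gamma>1 z of Var w \<Rightarrow> w | _ \<Rightarrow> z)"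
  have f: "\<gamma>1 z = Var (f z)" "\<gamma>2 (f z) = Var z" if "z \<in> V" for z
    using ren[OF that] by (auto simp: f_def)
  have "inj_on f V" by (rule inj_onI) (metis f(2) trm.inject(1))
  then obtain \<rho> where \<rho>: "bij \<rho>" "\<And>x. x \<in> V \<Longrightarrow> \<rho> x = f x"
    using finite_inj_on_extend_bij[of V f] by (auto simp: V_def)
  have "subst_goal \<phi>2 G = subst_goal \<gamma>1 (subst_goal \<phi>1 G)" by (simp add: g1)
  also have "\<dots> = subst_goal (Var \<circ> \<rho>) (subst_goal \<phi>1 G)"
    by (rule subst_goal_cong) (simp add: f \<rho>(2) V_def)
  finally show ?thesis using \<rho>(1) that by blast
qed

inductive atom_step ::
  "('p, 'f, 'v) program \<Rightarrow> ('p, 'f, 'v) atom \<Rightarrow> 'v set \<Rightarrow> ('p, 'f, 'v) goal \<Rightarrow> ('f, 'v) subst \<Rightarrow> bool"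
  for P where
  atom_step_eq: "good_mgu \<theta> {(t1, t2)} \<Longrightarrow> atom_step P (Eq t1 t2) V [] \<theta>"
| atom_step_neq: "\<not> (\<exists>\<sigma>. subst_trm \<sigma> t1 = subst_trm \<sigma> t2) \<Longrightarrow> atom_step P (Neq t1 t2) V [] Var"
| atom_step_res: "\<lbrakk> C0 \<in> P; bij \<rho>; rename_clause \<rho> C0 = Cl p us B;
    vars_clause (Cl p us B) \<inter> (vars_atom (Pred p ts) \<union> V) = {};
    length ts = length us; good_mgu \<theta> (set (zip ts us)) \<rbrakk>
    \<Longrightarrow> atom_step P (Pred p ts) V (subst_goal \<theta> B) \<theta>"

lemma step_Cons_iff:
  "step P (A # R) G' \<longleftrightarrow> (\<exists>X \<theta>. atom_step P A (vars_goal R) X \<theta> \<and> G' = X @ subst_goal \<theta> R)"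
proof
  assume "step P (A # R) G'"
  then show "\<exists>X \<theta>. atom_step P A (vars_goal R) X \<theta> \<and> G' = X @ subst_goal \<theta> R"
  proof cases
    case (step_neq t1 t2)
    then show ?thesis by (auto intro!: exI[of _ "[]"] exI[of _ Var] atom_step_neq)
  next
    case (step_res C0 \<rho> q us B p ts \<theta>)
    then show ?thesis by (auto intro!: exI[of _ "subst_goal \<theta> B"] exI[of _ \<theta>] atom_step_res)
  qed (auto intro: atom_step_eq)
next
  assume "\<exists>X \<theta>. atom_step P A (vars_goal R) X \<theta> \<and> G' = X @ subst_goal \<theta> R"
  then obtain X \<theta> where "atom_step P A (vars_goal R) X \<theta>" and G': "G' = X @ subst_goal \<theta> R" by blast
  then show "step P (A # R) G'"
  proof cases
    case (atom_step_res C0 \<rho> p us B ts)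
    have "step P (Pred p ts # R) (subst_goal \<theta> (B @ R))"
      by (rule step.step_res) (use atom_step_res in auto)
    then show ?thesis using G' atom_step_res by simp
  qed (use G' in \<open>auto intro: step.intros\<close>)
qed

lemma no_step_Nil: "\<not> step P [] G'"
  by (auto elim: step.cases)

lemma atom_step_mono: "atom_step P A V X \<theta> \<Longrightarrow> V' \<subseteq> V \<Longrightarrow> atom_step P A V' X \<theta>"
proof (induction rule: atom_step.induct)
  case (atom_step_res C0 \<rho> p us B ts V \<theta>)
  then show ?case by (intro atom_step.atom_step_res[of C0 P \<rho> p us B]) auto
qed (auto intro: atom_step.intros)

text \<open>The counters \<open>n\<close> and \<open>k\<close> are the quantities minimised by \<open>nu\<close> and \<open>mu\<close>.\<close>

inductive succeeds :: "('p, 'f, 'v) program \<Rightarrow> ('p, 'f, 'v) goal \<Rightarrow> nat \<Rightarrow> nat \<Rightarrow> bool"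
  for P where
  succeeds_Nil: "succeeds P [] 0 0"
| succeeds_step: "step P G G' \<Longrightarrow> succeeds P G' n k \<Longrightarrow>
    succeeds P G (Suc n) (k + (if leftmost_nonbasic G then 1 else 0))"

lemma succeeds_Cons_iff:
  "succeeds P (A # R) n k \<longleftrightarrow>
    (\<exists>n' k' X \<theta>. n = Suc n' \<and> k = k' + (if nonbasic A then 1 else 0) \<and>
      atom_step P A (vars_goal R) X \<theta> \<and> succeeds P (X @ subst_goal \<theta> R) n' k')"
proof
  assume "succeeds P (A # R) n k"
  then show "\<exists>n' k' X \<theta>. n = Suc n' \<and> k = k' + (if nonbasic A then 1 else 0) \<and>
      atom_step P A (vars_goal R) X \<theta> \<and> succeeds P (X @ subst_goal \<theta> R) n' k'"
    by cases (auto simp: step_Cons_iff)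
qed (use step_Cons_iff succeeds_step in fastforce)

lemma succeeds_ConsI:
  "atom_step P A (vars_goal R) X \<theta> \<Longrightarrow> succeeds P (X @ subst_goal \<theta> R) n k \<Longrightarrow>
    succeeds P (A # R) (Suc n) (k + (if nonbasic A then 1 else 0))"
  using succeeds_Cons_iff by blast

definition rename_subst :: "('v \<Rightarrow> 'v) \<Rightarrow> ('f, 'v) subst \<Rightarrow> ('f, 'v) subst" where
  "rename_subst \<rho> \<theta> = (\<lambda>y. subst_trm (Var \<circ> \<rho>) (\<theta> (inv \<rho> y)))"

lemma vars_rename_trm: "vars_trm (subst_trm (Var \<circ> \<rho>) t) = \<rho> ` vars_trm t"
  by (auto simp: vars_subst_trm)

lemma vars_rename_goal: "vars_goal (subst_goal (Var \<circ> \<rho>) G) = \<rho> ` vars_goal G"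
  by (auto simp: vars_subst_goal)

lemma vars_pairs_rename: "vars_pairs (set (subst_pairs (Var \<circ> \<rho>) L)) = \<rho> ` vars_pairs (set L)"
  unfolding vars_pairs_subst_pairs vars_rename_trm by blast

lemma subst_trm_rename_inv:
  "bij \<rho> \<Longrightarrow> subst_trm (\<lambda>x. \<gamma> (inv \<rho> x)) (subst_trm (Var \<circ> \<rho>) u) = subst_trm \<gamma> u"
  by (induction u) (auto simp: bij_def)

lemma subst_comp_rename_subst:
  "bij \<rho> \<Longrightarrow> subst_comp (Var \<circ> \<rho>) (rename_subst \<rho> \<theta>) = subst_comp \<theta> (Var \<circ> \<rho>)"
  by (auto simp: subst_comp_def rename_subst_def bij_def)

lemma subst_trm_rename_subst:
  "bij \<rho> \<Longrightarrow> subst_trm (rename_subst \<rho> \<theta>) (subst_trm (Var \<circ> \<rho>) t) = subst_trm (Var \<circ> \<rho>) (subst_trm \<theta> t)"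
  by (metis subst_comp_rename_subst subst_comp_apply)

lemma subst_goal_rename_subst:
  "bij \<rho> \<Longrightarrow> subst_goal (rename_subst \<rho> \<theta>) (subst_goal (Var \<circ> \<rho>) G) = subst_goal (Var \<circ> \<rho>) (subst_goal \<theta> G)"
  by (metis subst_comp_rename_subst subst_goal_comp)

lemma sdom_rename_subst: "bij \<rho> \<Longrightarrow> sdom (rename_subst \<rho> \<theta>) = \<rho> ` sdom \<theta>"
proof -
  assume b: "bij \<rho>"
  have "subst_trm (Var \<circ> \<rho>) u = Var y \<longleftrightarrow> u = Var (inv \<rho> y)" for u y
    using b by (cases u) (auto simp: bij_def surj_f_inv_f)
  then have "sdom (rename_subst \<rho> \<theta>) = inv \<rho> -` sdom \<theta>"
    by (auto simp: sdom_def rename_subst_def)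
  then show ?thesis using b by (simp add: bij_vimage_eq_inv_image bij_imp_bij_inv inv_inv_eq)
qed

lemma svran_rename_subst: "bij \<rho> \<Longrightarrow> svran (rename_subst \<rho> \<theta>) = \<rho> ` svran \<theta>"
proof -
  assume b: "bij \<rho>"
  have "svran (rename_subst \<rho> \<theta>) = (\<Union>y\<in>\<rho> ` sdom \<theta>. vars_trm (rename_subst \<rho> \<theta> y))"
    by (simp add: svran_def sdom_rename_subst[OF b])
  also have "\<dots> = (\<Union>x\<in>sdom \<theta>. \<rho> ` vars_trm (\<theta> x))"
    using b by (simp add: rename_subst_def vars_rename_trm bij_def)
  finally show ?thesis by (auto simp: svran_def)
qed

lemma good_mgu_rename:
  assumes b: "bij \<rho>" and good: "good_mgu \<theta> (set L)"
  shows "good_mgu (rename_subst \<rho> \<theta>) (set (subst_pairs (Var \<circ> \<rho>) L))"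
proof -
  have "unifier (rename_subst \<rho> \<theta>) (set (subst_pairs (Var \<circ> \<rho>) L))"
    using is_mgu_unifier[OF good_mgu_is_mgu[OF good]] b
    by (simp add: unifier_subst_pairs subst_comp_rename_subst) (auto simp: unifier_def)
  moreover have "\<exists>\<gamma>. \<tau> = subst_comp (rename_subst \<rho> \<theta>) \<gamma>"
    if "unifier \<tau> (set (subst_pairs (Var \<circ> \<rho>) L))" for \<tau>
  proof -
    have "unifier (subst_comp (Var \<circ> \<rho>) \<tau>) (set L)" using that by (simp add: unifier_subst_pairs)
    then obtain \<gamma> where \<gamma>: "subst_comp (Var \<circ> \<rho>) \<tau> = subst_comp \<theta> \<gamma>"
      using good by (auto simp: good_mgu_def is_mgu_def)
    have "\<tau> y = subst_trm \<gamma> (\<theta> (inv \<rho> y))" for y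
      using fun_cong[OF \<gamma>, of "inv \<rho> y"] b by (simp add: subst_comp_def bij_def surj_f_inv_f)
    then have "\<tau> = subst_comp (rename_subst \<rho> \<theta>) (\<lambda>x. \<gamma> (inv \<rho> x))"
      by (simp add: subst_comp_def rename_subst_def fun_eq_iff subst_trm_rename_inv[OF b])
    then show ?thesis by blast
  qed
  moreover have "relevant (rename_subst \<rho> \<theta>) (set (subst_pairs (Var \<circ> \<rho>) L))"
    using good unfolding relevant_def good_mgu_def sdom_rename_subst[OF b] svran_rename_subst[OF b]
      vars_pairs_rename by blast
  moreover have "idempotent (rename_subst \<rho> \<theta>)"
    using good idempotent_subst_trm[of \<theta>] subst_trm_rename_subst[OF b, of \<theta>]
    by (simp add: idempotent_def good_mgu_def subst_comp_def fun_eq_iff rename_subst_def)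
  ultimately show ?thesis by (simp add: good_mgu_def is_mgu_def)
qed

lemma rename_clause_comp: "rename_clause \<rho> (rename_clause \<rho>' C) = rename_clause (\<rho> \<circ> \<rho>') C"
proof (cases C)
  case (Cl p us B)
  have comp: "subst_comp (Var \<circ> \<rho>') (Var \<circ> \<rho>) = Var \<circ> (\<rho> \<circ> \<rho>')" by (auto simp: subst_comp_def)
  have t: "subst_trm (Var \<circ> \<rho>) (subst_trm (Var \<circ> \<rho>') t) = subst_trm (Var \<circ> (\<rho> \<circ> \<rho>')) t" for t
    unfolding comp[symmetric] by (rule subst_comp_apply[symmetric])
  have g: "subst_goal (Var \<circ> \<rho>) (subst_goal (Var \<circ> \<rho>') G) = subst_goal (Var \<circ> (\<rho> \<circ> \<rho>')) G" for G
    unfolding comp[symmetric] by (rule subst_goal_comp[symmetric])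
  show ?thesis using Cl by (simp only: rename_clause.simps map_map comp_def[of "subst_trm _" "subst_trm _"] t g)
qed

lemma vars_clause_Cl: "vars_clause (Cl p us B) = (\<Union>u\<in>set us. vars_trm u) \<union> vars_goal B"
  by (simp add: vars_clause_def)

lemma atom_step_rename:
  fixes P :: "('p, 'f, 'v) program" and \<rho> :: "'v \<Rightarrow> 'v"
  assumes b: "bij \<rho>" and step: "atom_step P A V X \<theta>"
  shows "atom_step P (subst_atom (Var \<circ> \<rho>) A) (\<rho> ` V) (subst_goal (Var \<circ> \<rho>) X) (rename_subst \<rho> \<theta>)"
  using step
proof cases
  case (atom_step_eq t1 t2)
  have "good_mgu (rename_subst \<rho> \<theta>) (set (subst_pairs (Var \<circ> \<rho>) [(t1, t2)]))"
    by (rule good_mgu_rename[OF b]) (use atom_step_eq in simp)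
  then show ?thesis using atom_step_eq by (auto intro: atom_step.atom_step_eq)
next
  case (atom_step_neq t1 t2)
  have "\<not> (\<exists>\<sigma>. subst_trm \<sigma> (subst_trm (Var \<circ> \<rho>) t1) = subst_trm \<sigma> (subst_trm (Var \<circ> \<rho>) t2))"
    using atom_step_neq by (metis subst_comp_apply)
  then have "atom_step P (Neq (subst_trm (Var \<circ> \<rho>) t1) (subst_trm (Var \<circ> \<rho>) t2)) (\<rho> ` V) [] Var"
    by (rule atom_step.atom_step_neq)
  moreover have "rename_subst \<rho> Var = (Var :: ('f, 'v) subst)" using b by (auto simp: rename_subst_def bij_def surj_f_inv_f)
  ultimately show ?thesis unfolding atom_step_neq(1-3) by simp
next
  case (atom_step_res C0 \<rho>' p us B ts)
  let ?r = "Var \<circ> \<rho>"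
  have "rename_clause (\<rho> \<circ> \<rho>') C0 = Cl p (map (subst_trm ?r) us) (subst_goal ?r B)"
    using atom_step_res rename_clause_comp[of \<rho> \<rho>' C0] by simp
  moreover have "vars_clause (Cl p (map (subst_trm ?r) us) (subst_goal ?r B)) \<inter>
      (vars_atom (Pred p (map (subst_trm ?r) ts)) \<union> \<rho> ` V) = {}"
  proof -
    have "vars_clause (Cl p (map (subst_trm ?r) us) (subst_goal ?r B)) = \<rho> ` vars_clause (Cl p us B)"
      and "vars_atom (Pred p (map (subst_trm ?r) ts)) \<union> \<rho> ` V = \<rho> ` (vars_atom (Pred p ts) \<union> V)"
      by (auto simp: vars_clause_Cl vars_rename_trm vars_rename_goal)
    then show ?thesis
      using atom_step_res b by (simp add: image_Int[symmetric] bij_is_inj)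
  qed
  moreover have "good_mgu (rename_subst \<rho> \<theta>) (set (zip (map (subst_trm ?r) ts) (map (subst_trm ?r) us)))"
    using good_mgu_rename[OF b, of \<theta> "zip ts us"] atom_step_res by (simp add: subst_pairs_zip)
  ultimately have "atom_step P (Pred p (map (subst_trm ?r) ts)) (\<rho> ` V)
      (subst_goal (rename_subst \<rho> \<theta>) (subst_goal ?r B)) (rename_subst \<rho> \<theta>)"
    using atom_step_res b by (intro atom_step.atom_step_res[of C0 _ "\<rho> \<circ> \<rho>'"]) (auto simp: bij_comp)
  then show ?thesis using atom_step_res by (simp add: subst_goal_rename_subst[OF b])
qed

lemma succeeds_rename: "succeeds P G n k \<Longrightarrow> bij \<rho> \<Longrightarrow> succeeds P (subst_goal (Var \<circ> \<rho>) G) n k"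
proof (induction rule: succeeds.induct)
  case succeeds_Nil
  then show ?case by (simp add: succeeds.succeeds_Nil)
next
  case (succeeds_step G G' n k)
  obtain A R where G: "G = A # R" using succeeds_step.hyps(1) by (cases G) (auto simp: no_step_Nil)
  obtain X \<theta> where step: "atom_step P A (vars_goal R) X \<theta>" and G': "G' = X @ subst_goal \<theta> R"
    using succeeds_step.hyps(1) G by (auto simp: step_Cons_iff)
  have "atom_step P (subst_atom (Var \<circ> \<rho>) A) (vars_goal (subst_goal (Var \<circ> \<rho>) R))
      (subst_goal (Var \<circ> \<rho>) X) (rename_subst \<rho> \<theta>)"
    using atom_step_rename[OF succeeds_step.prems step] by (simp add: vars_rename_goal)
  moreover have "subst_goal (Var \<circ> \<rho>) G' =
      subst_goal (Var \<circ> \<rho>) X @ subst_goal (rename_subst \<rho> \<theta>) (subst_goal (Var \<circ> \<rho>) R)"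
    using G' by (simp add: subst_goal_rename_subst[OF succeeds_step.prems])
  then have "succeeds P (subst_goal (Var \<circ> \<rho>) X @
      subst_goal (rename_subst \<rho> \<theta>) (subst_goal (Var \<circ> \<rho>) R)) n k"
    using succeeds_step.IH[OF succeeds_step.prems] by (simp add: comp_def)
  ultimately have "succeeds P (subst_atom (Var \<circ> \<rho>) A # subst_goal (Var \<circ> \<rho>) R) (Suc n)
      (k + (if nonbasic (subst_atom (Var \<circ> \<rho>) A) then 1 else 0))"
    by (rule succeeds_ConsI)
  then show ?case using G by (simp add: comp_def)
qed

lemma succeeds_mgu_variant:
  "is_mgu \<phi>1 E \<Longrightarrow> is_mgu \<phi>2 E \<Longrightarrow> succeeds P (subst_goal \<phi>1 G) n k \<Longrightarrow> succeeds P (subst_goal \<phi>2 G) n k"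
  by (metis is_mgu_variant succeeds_rename)

lemma ex_bij_fresh:
  fixes C D W :: "'a set"
  assumes inf: "infinite (UNIV :: 'a set)" and fin: "finite C" "finite D" "finite W"
    and disj: "C \<inter> D = {}"
  obtains \<pi> where "bij \<pi>" "\<And>x. x \<in> D \<Longrightarrow> \<pi> x = x" "\<pi> ` C \<inter> (D \<union> W) = {}"
proof -
  have "infinite (UNIV - (C \<union> D \<union> W))" using inf fin by (simp add: Diff_infinite_finite)
  then obtain F where F: "F \<subseteq> UNIV - (C \<union> D \<union> W)" "finite F" "card F = card C"
    using infinite_arbitrarily_large by metis
  then obtain g where g: "bij_betw g C F" using finite_same_card_bij[OF fin(1)] by metis
  define f where "f = (\<lambda>x. if x \<in> C then g x else x)"
  have "inj_on f (C \<union> D)"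
    using g F disj unfolding f_def inj_on_def bij_betw_def by (auto simp: image_iff)
  then obtain \<pi> where \<pi>: "bij \<pi>" "\<And>x. x \<in> C \<union> D \<Longrightarrow> \<pi> x = f x"
    using finite_inj_on_extend_bij[of "C \<union> D" f] fin by auto
  have "\<pi> ` C = g ` C" by (rule image_cong) (auto simp: \<pi>(2) f_def)
  then have "\<pi> ` C \<inter> (D \<union> W) = {}" using g F by (auto simp: bij_betw_def)
  moreover have "\<pi> x = x" if "x \<in> D" for x using that disj \<pi>(2) by (auto simp: f_def)
  ultimately show ?thesis using that \<pi>(1) by blast
qed

lemma succeeds_res_fresh:
  fixes P :: "('p, 'f, 'v) program"
  assumes inf: "infinite (UNIV :: 'v set)"
    and C0: "C0 \<in> P" and b: "bij \<rho>" and ren: "rename_clause \<rho> C0 = Cl p us B"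
    and disj: "vars_clause (Cl p us B) \<inter> (vars_atom (Pred p ts) \<union> vars_goal R) = {}"
    and len: "length ts = length us" and good: "good_mgu \<theta> (set (zip ts us))"
    and succ: "succeeds P (subst_goal \<theta> (B @ R)) n k" and fin: "finite W"
  obtains \<rho>' us' B' \<theta>' where "bij \<rho>'" "rename_clause \<rho>' C0 = Cl p us' B'"
    "vars_clause (Cl p us' B') \<inter> (vars_atom (Pred p ts) \<union> vars_goal R \<union> W) = {}"
    "length ts = length us'" "good_mgu \<theta>' (set (zip ts us'))" "succeeds P (subst_goal \<theta>' (B' @ R)) n k"
proof -
  define D where "D = vars_atom (Pred p ts) \<union> vars_goal R"
  have "finite (vars_clause (Cl p us B))" "finite D" by (auto simp: vars_clause_Cl D_def)
  then obtain \<pi> where \<pi>: "bij \<pi>" "\<And>x. x \<in> D \<Longrightarrow> \<pi> x = x"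
    and fresh: "\<pi> ` vars_clause (Cl p us B) \<inter> (D \<union> W) = {}"
    using ex_bij_fresh[OF inf _ _ fin] disj unfolding D_def by metis
  let ?r = "Var \<circ> \<pi>"
  define us' where "us' = map (subst_trm ?r) us"
  define B' where "B' = subst_goal ?r B"
  have "rename_clause (\<pi> \<circ> \<rho>) C0 = Cl p us' B'"
    using rename_clause_comp[of \<pi> \<rho> C0] ren by (simp add: us'_def B'_def)
  moreover have "vars_clause (Cl p us' B') = \<pi> ` vars_clause (Cl p us B)"
    by (auto simp: us'_def B'_def vars_clause_Cl vars_rename_trm vars_rename_goal)
  moreover have ts: "map (subst_trm ?r) ts = ts"
    by (intro map_idI subst_trm_id) (auto simp: D_def intro!: \<pi>(2))
  moreover have R: "subst_goal ?r R = R"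
    by (intro subst_goal_id) (auto simp: D_def intro!: \<pi>(2))
  moreover have "good_mgu (rename_subst \<pi> \<theta>) (set (zip ts us'))"
    using good_mgu_rename[OF \<pi>(1) good] ts by (simp add: subst_pairs_zip us'_def)
  moreover have "succeeds P (subst_goal (rename_subst \<pi> \<theta>) (B' @ R)) n k"
  proof -
    have "subst_goal (rename_subst \<pi> \<theta>) (B' @ R) = subst_goal (rename_subst \<pi> \<theta>) (subst_goal ?r (B @ R))"
      using R by (simp add: B'_def)
    also have "\<dots> = subst_goal ?r (subst_goal \<theta> (B @ R))" by (rule subst_goal_rename_subst[OF \<pi>(1)])
    finally show ?thesis using succeeds_rename[OF succ \<pi>(1)] by simp
  qed
  ultimately show ?thesis
    using that[of "\<pi> \<circ> \<rho>"] \<pi>(1) b fresh len by (auto simp: bij_comp D_def us'_def)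
qed

definition eqs_goal :: "(('f, 'v) trm \<times> ('f, 'v) trm) list \<Rightarrow> ('p, 'f, 'v) goal" where
  "eqs_goal L = map (\<lambda>(s, t). Eq s t) L"

lemma eqs_goal_Nil [simp]: "eqs_goal [] = []"
  and eqs_goal_Cons [simp]: "eqs_goal ((s, t) # L) = Eq s t # eqs_goal L"
  by (simp_all add: eqs_goal_def)

lemma subst_eqs_goal [simp]: "subst_goal \<sigma> (eqs_goal L) = eqs_goal (subst_pairs \<sigma> L)"
  by (induction L) auto

lemma vars_eqs_goal [simp]: "vars_goal (eqs_goal L) = vars_pairs (set L)"
  by (induction L) auto

lemma ex_eqs_goal: "\<forall>a\<in>set Eqs. is_eq a \<Longrightarrow> \<exists>L. Eqs = eqs_goal L"
proof (induction Eqs)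
  case (Cons a Eqs)
  then obtain L where "Eqs = eqs_goal L" by auto
  moreover obtain s t where "a = Eq s t" using Cons.prems by (cases a) auto
  ultimately show ?case by (metis eqs_goal_Cons)
qed (metis eqs_goal_Nil)

lemma succeeds_eqs_D:
  "succeeds P (eqs_goal L @ R) n k \<Longrightarrow>
    \<exists>\<sigma>. is_mgu \<sigma> (set L) \<and> length L \<le> n \<and> succeeds P (subst_goal \<sigma> R) (n - length L) k"
proof (induction "length L" arbitrary: L R n)
  case 0
  then show ?case using good_mgu_is_mgu[OF good_mgu_Var_empty] by auto
next
  case (Suc N)
  then obtain s t L' where L: "L = (s, t) # L'" by (metis length_Suc_conv surj_pair)
  from Suc.prems obtain n' X \<theta> where n: "n = Suc n'"
    and step: "atom_step P (Eq s t) (vars_goal (eqs_goal L' @ R)) X \<theta>"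
    and succ: "succeeds P (X @ subst_goal \<theta> (eqs_goal L' @ R)) n' k"
    unfolding L by (auto simp: succeeds_Cons_iff)
  from step have X: "X = []" and good: "good_mgu \<theta> {(s, t)}" by (auto elim: atom_step.cases)
  from succ X Suc.hyps(1)[of "subst_pairs \<theta> L'" "subst_goal \<theta> R" n'] Suc.hyps(2) L
  obtain \<sigma> where \<sigma>: "is_mgu \<sigma> (set (subst_pairs \<theta> L'))"
    and "length L' \<le> n'" "succeeds P (subst_goal \<sigma> (subst_goal \<theta> R)) (n' - length L') k"
    by auto
  moreover have "is_mgu (subst_comp \<theta> \<sigma>) (set L)"
    using is_mgu_comp[OF good_mgu_is_mgu[OF good] \<sigma>] L by simp
  ultimately show ?case using n L by auto
qed

lemma succeeds_eqs_I:
  "is_mgu \<sigma> (set L) \<Longrightarrow> succeeds P (subst_goal \<sigma> R) m k \<Longrightarrow> succeeds P (eqs_goal L @ R) (m + length L) k"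
proof (induction "length L" arbitrary: L \<sigma> R m)
  case 0
  then have "is_mgu \<sigma> {}" and "L = []" by simp_all
  then show ?case
    using succeeds_mgu_variant[OF _ good_mgu_is_mgu[OF good_mgu_Var_empty] 0(3)] by simp
next
  case (Suc N)
  then obtain s t L' where L: "L = (s, t) # L'" by (metis length_Suc_conv surj_pair)
  have unif: "unifier \<sigma> ({(s, t)} \<union> set L')" using is_mgu_unifier[OF Suc.prems(1)] L by simp
  then obtain \<theta> where good: "good_mgu \<theta> {(s, t)}"
    using good_mgu_exists[of \<sigma> "[(s, t)]"] by (auto simp: unifier_union)
  obtain \<sigma>' where good': "good_mgu \<sigma>' (set (subst_pairs \<theta> L'))"
    using good_mgu_exists_after_mgu[OF good_mgu_is_mgu[OF good] unif] by blast
  have "is_mgu (subst_comp \<theta> \<sigma>') (set L)"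
    using is_mgu_comp[OF good_mgu_is_mgu[OF good] good_mgu_is_mgu[OF good']] L by simp
  from succeeds_mgu_variant[OF Suc.prems(1) this Suc.prems(2)]
  have "succeeds P (subst_goal \<sigma>' (subst_goal \<theta> R)) m k" by simp
  then have "succeeds P ([] @ subst_goal \<theta> (eqs_goal L' @ R)) (m + length L') k"
    using Suc.hyps(1)[OF _ good_mgu_is_mgu[OF good']] Suc.hyps(2) L by simp
  from succeeds_ConsI[OF atom_step_eq[OF good] this] show ?case using L by simp
qed

definition derivs_consistent :: "'p mode \<Rightarrow> ('p, 'f, 'v) program \<Rightarrow> ('p, 'f, 'v) goal \<Rightarrow> bool" where
  "derivs_consistent M P G \<longleftrightarrow> (\<forall>ds. derivation P ds \<and> hd ds = G \<longrightarrow> consistent M ds)"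

lemma derivation_Cons_iff:
  "derivation P (G # ds) \<longleftrightarrow> ds = [] \<or> step P G (hd ds) \<and> derivation P ds"
proof (cases ds)
  case (Cons G' ds')
  have "(\<forall>i. Suc i < length (G # ds) \<longrightarrow> step P ((G # ds) ! i) ((G # ds) ! Suc i)) \<longleftrightarrow>
      step P G G' \<and> (\<forall>i. Suc i < length ds \<longrightarrow> step P (ds ! i) (ds ! Suc i))"
    unfolding Cons by (auto simp: All_less_Suc2 simp del: nth_Cons_Suc)
  then show ?thesis using Cons by (simp add: derivation_def)
qed (simp add: derivation_def)

lemma consistent_ConsD: "consistent M (G # ds) \<Longrightarrow> consistent M ds"
  unfolding consistent_def by (metis Suc_mono length_Cons nth_Cons_Suc)

lemma derivs_consistent_step:
  assumes "derivs_consistent M P G" "step P G G'"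
  shows "derivs_consistent M P G'"
  unfolding derivs_consistent_def
proof (intro allI impI)
  fix ds assume ds: "derivation P ds \<and> hd ds = G'"
  then have "derivation P (G # ds)" using assms(2) by (simp add: derivation_Cons_iff)
  then have "consistent M (G # ds)" using assms(1) by (simp add: derivs_consistent_def)
  then show "consistent M ds" by (rule consistent_ConsD)
qed

lemma derivs_consistent_sat_atom:
  assumes "derivs_consistent M P (A # K)" "step P (A # K) G'" "nonbasic A"
  shows "sat_atom M A"
proof -
  have "derivation P [A # K, G']" using assms(2) by (simp add: derivation_Cons_iff derivation_def)
  then have "consistent M [A # K, G']" using assms(1) by (simp add: derivs_consistent_def)
  then show ?thesis using assms(3) unfolding consistent_def by fastforce
qed

section \<open>Isolated disequations\<close>

text \<open>A disequation of \<open>G1\<close> isolated in this sense is not instantiated by the equations \<open>L\<close>,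
  so the equations can be moved past it.\<close>

definition neqs_isolated ::
  "('p, 'f, 'v) goal \<Rightarrow> ('p, 'f, 'v) goal \<Rightarrow> (('f, 'v) trm \<times> ('f, 'v) trm) list \<Rightarrow> ('p, 'f, 'v) goal \<Rightarrow> bool" where
  "neqs_isolated G0 G1 L G2 \<longleftrightarrow> (\<forall>A t1 t2 B. G1 = A @ Neq t1 t2 # B \<longrightarrow>
      (vars_trm t1 \<union> vars_trm t2) \<inter> (vars_goal (G0 @ A @ B @ G2) \<union> vars_pairs (set L)) = {})"

lemma neqs_isolated_no_neqs: "\<forall>a\<in>set G1. \<not> is_neq a \<Longrightarrow> neqs_isolated G0 G1 L G2"
  by (auto simp: neqs_isolated_def)

lemma neqs_isolated_append:
  "neqs_isolated G0 (X @ Y) L G2 \<longleftrightarrow> neqs_isolated G0 X L (Y @ G2) \<and> neqs_isolated (G0 @ X) Y L G2"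
proof
  assume iso: "neqs_isolated G0 (X @ Y) L G2"
  have "neqs_isolated G0 X L (Y @ G2)"
    unfolding neqs_isolated_def
  proof (intro allI impI)
    fix A t1 t2 B assume "X = A @ Neq t1 t2 # B"
    then show "(vars_trm t1 \<union> vars_trm t2) \<inter> (vars_goal (G0 @ A @ B @ Y @ G2) \<union> vars_pairs (set L)) = {}"
      using iso[unfolded neqs_isolated_def, rule_format, of A t1 t2 "B @ Y"] by simp
  qed
  moreover have "neqs_isolated (G0 @ X) Y L G2"
    unfolding neqs_isolated_def
  proof (intro allI impI)
    fix A t1 t2 B assume "Y = A @ Neq t1 t2 # B"
    then show "(vars_trm t1 \<union> vars_trm t2) \<inter> (vars_goal ((G0 @ X) @ A @ B @ G2) \<union> vars_pairs (set L)) = {}"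
      using iso[unfolded neqs_isolated_def, rule_format, of "X @ A" t1 t2 B] by simp
  qed
  ultimately show "neqs_isolated G0 X L (Y @ G2) \<and> neqs_isolated (G0 @ X) Y L G2" ..
next
  assume "neqs_isolated G0 X L (Y @ G2) \<and> neqs_isolated (G0 @ X) Y L G2"
  then have isoX: "neqs_isolated G0 X L (Y @ G2)" and isoY: "neqs_isolated (G0 @ X) Y L G2" by auto
  show "neqs_isolated G0 (X @ Y) L G2"
    unfolding neqs_isolated_def
  proof (intro allI impI)
    fix A t1 t2 B assume "X @ Y = A @ Neq t1 t2 # B"
    then consider (inX) Z where "X = A @ Neq t1 t2 # Z" "B = Z @ Y"
      | (inY) Z where "A = X @ Z" "Y = Z @ Neq t1 t2 # B"
    proof -
      assume inX: "\<And>Z. X = A @ Neq t1 t2 # Z \<Longrightarrow> B = Z @ Y \<Longrightarrow> thesis"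
        and inY: "\<And>Z. A = X @ Z \<Longrightarrow> Y = Z @ Neq t1 t2 # B \<Longrightarrow> thesis"
      from \<open>X @ Y = A @ Neq t1 t2 # B\<close> obtain us where
        "X = A @ us \<and> us @ Y = Neq t1 t2 # B \<or> X @ us = A \<and> Y = us @ Neq t1 t2 # B"
        by (auto simp: append_eq_append_conv2)
      then show thesis
        using inX inY[of "[]"] inY by (cases us) auto
    qed
    then show "(vars_trm t1 \<union> vars_trm t2) \<inter> (vars_goal (G0 @ A @ B @ G2) \<union> vars_pairs (set L)) = {}"
    proof cases
      case inX
      then show ?thesis using isoX[unfolded neqs_isolated_def, rule_format, of A t1 t2 Z] by auto
    next
      case inY
      then show ?thesis using isoY[unfolded neqs_isolated_def, rule_format, of Z t1 t2 B] by auto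
    qed
  qed
qed

lemma subst_goal_eq_Neq_split:
  assumes "subst_goal \<theta> G = A' @ Neq t1 t2 # B'"
  obtains A u1 u2 B where "G = A @ Neq u1 u2 # B" "A' = subst_goal \<theta> A" "B' = subst_goal \<theta> B"
    "t1 = subst_trm \<theta> u1" "t2 = subst_trm \<theta> u2"
proof -
  from assms obtain A R where "G = A @ R" "subst_goal \<theta> A = A'" "subst_goal \<theta> R = Neq t1 t2 # B'"
    by (auto simp: subst_goal_def map_eq_append_conv)
  moreover from this(3) obtain b B where "R = b # B" "subst_atom \<theta> b = Neq t1 t2" "subst_goal \<theta> B = B'"
    by (auto simp: subst_goal_def map_eq_Cons_conv)
  moreover from this(2) obtain u1 u2 where "b = Neq u1 u2" "t1 = subst_trm \<theta> u1" "t2 = subst_trm \<theta> u2"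
    by (cases b) auto
  ultimately show ?thesis using that by blast
qed

lemma atom_step_untouched:
  assumes step: "atom_step P A V X \<theta>" and "x \<notin> vars_atom A" and "x \<in> V"
  shows "untouched \<theta> x \<and> x \<notin> vars_goal X"
  using step
proof cases
  case (atom_step_eq t1 t2)
  have "confined \<theta> (vars_pairs {(t1, t2)})" by (rule good_mgu_confined) (use atom_step_eq in simp)
  then show ?thesis using atom_step_eq assms(2) by (auto intro: confined_untouched)
next
  case (atom_step_res C0 \<rho> p us B ts)
  have "confined \<theta> (vars_pairs (set (zip ts us)))" by (rule good_mgu_confined) (use atom_step_res in simp)
  moreover have "x \<notin> vars_pairs (set (zip ts us))"
    using atom_step_res assms(2,3) by (auto simp: vars_pairs_zip vars_clause_Cl)
  ultimately have u: "untouched \<theta> x" by (rule confined_untouched)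
  have "x \<notin> vars_goal B" using atom_step_res assms(3) by (auto simp: vars_clause_Cl)
  then show ?thesis using u atom_step_res by (simp add: untouched_in_vars_subst_goal[OF u])
qed (simp add: untouched_Var)

lemma untouched_in_vars_subst_pairs:
  "untouched \<theta> x \<Longrightarrow> x \<in> vars_pairs (set (subst_pairs \<theta> L)) \<longleftrightarrow> x \<in> vars_pairs (set L)"
  using untouched_in_vars_subst_goal[of \<theta> x "eqs_goal L"] by simp

lemma untouched_disjoint:
  assumes "\<And>x. x \<in> U \<Longrightarrow> untouched \<theta> x \<and> x \<notin> vars_goal X"
    and "U \<inter> (vars_goal G \<union> vars_pairs (set L)) = {}"
  shows "U \<inter> (vars_goal (X @ subst_goal \<theta> G) \<union> vars_pairs (set (subst_pairs \<theta> L))) = {}"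
proof -
  have "x \<notin> vars_goal (X @ subst_goal \<theta> G) \<union> vars_pairs (set (subst_pairs \<theta> L))" if "x \<in> U" for x
  proof -
    have u: "untouched \<theta> x" and X: "x \<notin> vars_goal X" using assms(1) that by auto
    have "x \<notin> vars_goal G" "x \<notin> vars_pairs (set L)" using assms(2) that by auto
    then have "x \<notin> vars_goal (subst_goal \<theta> G)" "x \<notin> vars_pairs (set (subst_pairs \<theta> L))"
      using untouched_in_vars_subst_goal[OF u, of G] untouched_in_vars_subst_pairs[OF u, of L] by blast+
    then show ?thesis using X unfolding vars_goal_append by blast
  qed
  then show ?thesis by blast
qed

lemma neqs_isolated_step:
  assumes iso: "neqs_isolated (A # G0) G1 L G2" and step: "atom_step P A V X \<theta>" and V: "vars_goal G1 \<subseteq> V"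
  shows "neqs_isolated (X @ subst_goal \<theta> G0) (subst_goal \<theta> G1) (subst_pairs \<theta> L) (subst_goal \<theta> G2)"
  unfolding neqs_isolated_def
proof (intro allI impI)
  fix A' t1 t2 B' assume "subst_goal \<theta> G1 = A' @ Neq t1 t2 # B'"
  then obtain A0 u1 u2 B0 where G1: "G1 = A0 @ Neq u1 u2 # B0" and A': "A' = subst_goal \<theta> A0"
    and B': "B' = subst_goal \<theta> B0" and t: "t1 = subst_trm \<theta> u1" "t2 = subst_trm \<theta> u2"
    by (rule subst_goal_eq_Neq_split)
  let ?U = "vars_trm u1 \<union> vars_trm u2"
  have disj: "?U \<inter> (vars_goal (A # G0 @ A0 @ B0 @ G2) \<union> vars_pairs (set L)) = {}"
    using iso G1 by (simp add: neqs_isolated_def)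
  have fresh: "untouched \<theta> x \<and> x \<notin> vars_goal X" if "x \<in> ?U" for x
  proof (rule atom_step_untouched[OF step])
    show "x \<notin> vars_atom A" using that disj by auto
    show "x \<in> V" using that V G1 by auto
  qed
  then have "t1 = u1" "t2 = u2" using t by (auto intro!: untouched_subst_trm_id)
  moreover have "?U \<inter> (vars_goal (X @ subst_goal \<theta> (G0 @ A0 @ B0 @ G2)) \<union> vars_pairs (set (subst_pairs \<theta> L))) = {}"
    by (rule untouched_disjoint[OF fresh]) (use disj in auto)
  ultimately show "(vars_trm t1 \<union> vars_trm t2) \<inter> (vars_goal ((X @ subst_goal \<theta> G0) @ A' @ B' @ subst_goal \<theta> G2)
      \<union> vars_pairs (set (subst_pairs \<theta> L))) = {}"
    using A' B' by simp
qed

abbreviation input_pos :: "'p mode \<Rightarrow> 'p \<Rightarrow> nat \<Rightarrow> bool" where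
  "input_pos M p j \<equiv> (case M p of Some ms \<Rightarrow> j < length ms \<and> ms ! j | None \<Rightarrow> False)"

lemma safe_clause_renamed_neq:
  assumes safe: "safe_clause M C0" and b: "bij \<rho>" and ren: "rename_clause \<rho> C0 = Cl p us B"
    and B: "B = B1 @ Neq u1 u2 # B2" and x: "x \<in> vars_trm u1 \<union> vars_trm u2"
  shows "(\<exists>j<length us. input_pos M p j \<and> x \<in> vars_trm (us ! j))
    \<or> (x \<notin> (\<Union>u\<in>set us. vars_trm u) \<and> x \<notin> vars_goal B1 \<and> x \<notin> vars_goal B2)"
proof -
  obtain us0 B0 where C0: "C0 = Cl p us0 B0" and us: "us = map (subst_trm (Var \<circ> \<rho>)) us0"
    and "B = subst_goal (Var \<circ> \<rho>) B0"
    using ren by (cases C0) auto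
  with B obtain C1 s1 s2 C2 where B0: "B0 = C1 @ Neq s1 s2 # C2"
    and C1: "B1 = subst_goal (Var \<circ> \<rho>) C1" and C2: "B2 = subst_goal (Var \<circ> \<rho>) C2"
    and u: "u1 = subst_trm (Var \<circ> \<rho>) s1" "u2 = subst_trm (Var \<circ> \<rho>) s2"
    by (metis subst_goal_eq_Neq_split)
  obtain y where y: "y \<in> vars_trm s1 \<union> vars_trm s2" and xy: "x = \<rho> y"
    using x u by (auto simp: vars_rename_trm)
  have "bd_cl C0 ! length C1 = Neq s1 s2" "length C1 < length (bd_cl C0)" using B0 C0 by auto
  then have "y \<in> input_vars M (hd_cl C0) \<or> local_var_of C0 (length C1) y"
    using safe y unfolding safe_clause_def by blast
  then show ?thesis
  proof
    assume "y \<in> input_vars M (hd_cl C0)"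
    then obtain j where "j < length us0" "input_pos M p j" "y \<in> vars_trm (us0 ! j)" using C0 by auto
    then show ?thesis using us xy by (intro disjI1 exI[of _ j]) (auto simp: vars_rename_trm)
  next
    assume "local_var_of C0 (length C1) y"
    then have "y \<notin> (\<Union>u\<in>set us0. vars_trm u)" "y \<notin> vars_goal C1" "y \<notin> vars_goal C2"
      using C0 B0 by (auto simp: local_var_of_def)
    then show ?thesis
      using xy b by (auto simp: us C1 C2 vars_rename_trm vars_rename_goal bij_is_inj inj_image_mem_iff)
  qed
qed

lemma good_mgu_input_ground:
  assumes sat: "sat_atom M (Pred p ts)" and len: "length ts = length us"
    and good: "good_mgu \<theta> (set (zip ts us))"
    and j: "j < length us" "input_pos M p j" and z: "z \<in> vars_trm (us ! j)"
  shows "vars_trm (\<theta> z) = {}"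
proof -
  obtain ms where "M p = Some ms" "j < length ms" "ms ! j" using j(2) by (cases "M p") auto
  then have ground: "ground (ts ! j)" using sat j(1) len by auto
  have "map (subst_trm \<theta>) ts = map (subst_trm \<theta>) us"
    using is_mgu_unifier[OF good_mgu_is_mgu[OF good]] unifier_zip[OF len] by simp
  then have "subst_trm \<theta> (us ! j) = ts ! j"
    using j(1) len ground_subst_trm[OF ground] by (metis nth_map)
  then have "vars_trm (subst_trm \<theta> (us ! j)) = {}" using ground by (simp add: ground_def)
  then show ?thesis using z by (auto simp: vars_subst_trm)
qed

text \<open>Safety at work: a variable of a disequation in the body of the selected clause is either an
  input variable, ground after unification with the well-moded selected atom, or local to the
  disequation, hence fresh and left alone by the unifier.\<close>

lemma res_body_neq_var:
  assumes safe: "safe_clause M C0" and b: "bij \<rho>" and ren: "rename_clause \<rho> C0 = Cl p us B"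
    and disj: "vars_clause (Cl p us B) \<inter> (vars_atom (Pred p ts) \<union> V) = {}"
    and len: "length ts = length us" and good: "good_mgu \<theta> (set (zip ts us))"
    and sat: "sat_atom M (Pred p ts)"
    and B: "B = B1 @ Neq u1 u2 # B2" and z: "z \<in> vars_trm u1 \<union> vars_trm u2"
  shows "vars_trm (\<theta> z) = {} \<or> (untouched \<theta> z \<and> z \<notin> vars_goal (B1 @ B2) \<and> z \<notin> V)"
  using safe_clause_renamed_neq[OF safe b ren B z]
proof
  assume "\<exists>j<length us. input_pos M p j \<and> z \<in> vars_trm (us ! j)"
  then show ?thesis using good_mgu_input_ground[OF sat len good] by blast
next
  assume local: "z \<notin> (\<Union>u\<in>set us. vars_trm u) \<and> z \<notin> vars_goal B1 \<and> z \<notin> vars_goal B2"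
  have "z \<in> vars_clause (Cl p us B)" using z B by (auto simp: vars_clause_Cl)
  then have "z \<notin> vars_atom (Pred p ts)" "z \<notin> V" using disj by auto
  moreover have "confined \<theta> (vars_pairs (set (zip ts us)))" by (rule good_mgu_confined[OF good])
  ultimately have "untouched \<theta> z"
    using local len by (auto simp: vars_pairs_zip intro: confined_untouched)
  then show ?thesis using local \<open>z \<notin> V\<close> by simp
qed

lemma atom_step_new_neqs_isolated:
  assumes safe: "safe_prog M P" and step: "atom_step P A V X \<theta>" and sat: "nonbasic A \<Longrightarrow> sat_atom M A"
    and V: "vars_goal R \<union> vars_pairs (set L) \<subseteq> V"
  shows "neqs_isolated [] X (subst_pairs \<theta> L) (subst_goal \<theta> R)"
  unfolding neqs_isolated_def
proof (intro allI impI)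
  fix A' t1 t2 X' assume X: "X = A' @ Neq t1 t2 # X'"
  from step show "(vars_trm t1 \<union> vars_trm t2) \<inter>
      (vars_goal ([] @ A' @ X' @ subst_goal \<theta> R) \<union> vars_pairs (set (subst_pairs \<theta> L))) = {}"
  proof cases
    case (atom_step_res C0 \<rho> p us B ts)
    then have "subst_goal \<theta> B = A' @ Neq t1 t2 # X'" using X by simp
    then obtain B1 u1 u2 B2 where B: "B = B1 @ Neq u1 u2 # B2" and A': "A' = subst_goal \<theta> B1"
      and X': "X' = subst_goal \<theta> B2" and t: "t1 = subst_trm \<theta> u1" "t2 = subst_trm \<theta> u2"
      by (rule subst_goal_eq_Neq_split)
    have "y \<notin> vars_goal (subst_goal \<theta> (B1 @ B2 @ R)) \<union> vars_pairs (set (subst_pairs \<theta> L))"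
      if y: "y \<in> vars_trm t1 \<union> vars_trm t2" for y
    proof -
      obtain z where z: "z \<in> vars_trm u1 \<union> vars_trm u2" and yz: "y \<in> vars_trm (\<theta> z)"
        using y t by (auto simp: vars_subst_trm)
      have "untouched \<theta> z \<and> z \<notin> vars_goal (B1 @ B2) \<and> z \<notin> V"
        using res_body_neq_var[of M C0 \<rho> p us B ts V \<theta> B1 u1 u2 B2 z] atom_step_res safe sat B z yz
        by (auto simp: safe_prog_def)
      moreover from this have "y = z" using yz by (auto simp: untouched_def)
      ultimately have "{y} \<inter> (vars_goal ([] @ subst_goal \<theta> (B1 @ B2 @ R)) \<union>
          vars_pairs (set (subst_pairs \<theta> L))) = {}"
        using V by (intro untouched_disjoint) auto
      then show ?thesis by auto
    qed
    then show ?thesis using A' X' by auto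
  qed (use X in simp_all)
qed

lemma neqs_isolated_step_first:
  assumes safe: "safe_prog M P" and iso: "neqs_isolated [] (A # G1) L G2"
    and step: "atom_step P A (vars_goal (G1 @ eqs_goal L @ G2)) X \<theta>"
    and sat: "nonbasic A \<Longrightarrow> sat_atom M A"
  shows "neqs_isolated [] (X @ subst_goal \<theta> G1) (subst_pairs \<theta> L) (subst_goal \<theta> G2)"
proof -
  have "neqs_isolated [] X (subst_pairs \<theta> L) (subst_goal \<theta> (G1 @ G2))"
    by (rule atom_step_new_neqs_isolated[OF safe step sat]) auto
  moreover have "neqs_isolated [A] G1 L G2"
    using iso neqs_isolated_append[of "[]" "[A]" G1] by simp
  then have "neqs_isolated (X @ subst_goal \<theta> []) (subst_goal \<theta> G1) (subst_pairs \<theta> L) (subst_goal \<theta> G2)"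
    by (rule neqs_isolated_step[OF _ step]) auto
  ultimately show ?thesis by (simp add: neqs_isolated_append)
qed

section \<open>Moving equations across an atom\<close>

lemma succeeds_mgu_swap:
  assumes \<theta>: "is_mgu \<theta> (set E)" and \<sigma>': "is_mgu \<sigma>' (set (subst_pairs \<theta> L))" and \<sigma>: "is_mgu \<sigma> (set L)"
    and succ: "succeeds P (subst_goal \<sigma>' (subst_goal \<theta> G)) n k"
  obtains \<theta>' where "good_mgu \<theta>' (set (subst_pairs \<sigma> E))" "succeeds P (subst_goal \<theta>' (subst_goal \<sigma> G)) n k"
proof -
  \<comment> \<open>Both \<open>\<theta>\<sigma>'\<close> and \<open>\<sigma>\<theta>'\<close> are mgus of \<open>E \<union> L\<close>, hence variants of each other.\<close>
  have mgu: "is_mgu (subst_comp \<theta> \<sigma>') (set E \<union> set L)" by (rule is_mgu_comp[OF \<theta> \<sigma>'])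
  have "unifier (subst_comp \<theta> \<sigma>') (set L \<union> set E)"
    using is_mgu_unifier[OF mgu] by (simp add: Un_commute)
  then obtain \<theta>' where good: "good_mgu \<theta>' (set (subst_pairs \<sigma> E))"
    using good_mgu_exists_after_mgu[OF \<sigma>] by blast
  have "is_mgu (subst_comp \<sigma> \<theta>') (set E \<union> set L)"
    using is_mgu_comp[OF \<sigma> good_mgu_is_mgu[OF good]] by (simp add: Un_commute)
  from succeeds_mgu_variant[OF mgu this] succ have "succeeds P (subst_goal \<theta>' (subst_goal \<sigma> G)) n k"
    by simp
  with good that show ?thesis by blast
qed

lemma succeeds_subst_ConsI:
  assumes good: "good_mgu \<sigma> (set L)" and neq: "is_neq A \<longrightarrow> vars_atom A \<inter> vars_pairs (set L) = {}"
    and step: "atom_step P A (vars_goal (R @ eqs_goal L)) X \<theta>"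
    and \<sigma>': "is_mgu \<sigma>' (set (subst_pairs \<theta> L))" and succ: "succeeds P (subst_goal \<sigma>' (X @ subst_goal \<theta> R)) m k"
  shows "succeeds P (subst_atom \<sigma> A # subst_goal \<sigma> R) (Suc m) (k + (if nonbasic A then 1 else 0))"
  using step
proof cases
  case (atom_step_eq t1 t2)
  obtain \<theta>' where "good_mgu \<theta>' (set (subst_pairs \<sigma> [(t1, t2)]))"
    and "succeeds P (subst_goal \<theta>' (subst_goal \<sigma> R)) m k"
    by (rule succeeds_mgu_swap[OF _ \<sigma>' good_mgu_is_mgu[OF good], of "[(t1, t2)]" P R])
      (use atom_step_eq succ good_mgu_is_mgu in auto)
  then show ?thesis using succeeds_ConsI[OF atom_step.atom_step_eq] atom_step_eq by fastforce
next
  case (atom_step_neq t1 t2)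
  have "subst_atom \<sigma> A = A"
    using neq atom_step_neq by (intro confined_subst_atom_id[OF good_mgu_confined[OF good]]) auto
  moreover have "succeeds P (subst_goal \<sigma> R) m k"
    using succeeds_mgu_variant[OF _ good_mgu_is_mgu[OF good]] \<sigma>' succ atom_step_neq by simp
  ultimately show ?thesis using succeeds_ConsI[OF atom_step.atom_step_neq] atom_step_neq by fastforce
next
  case (atom_step_res C0 \<rho> p us B ts)
  note confined = good_mgu_confined[OF good]
  have "vars_clause (Cl p us B) \<inter> vars_pairs (set L) = {}" using atom_step_res by auto
  then have us: "map (subst_trm \<sigma>) us = us" and B: "subst_goal \<sigma> B = B"
    using confined by (auto intro!: map_idI confined_subst_trm_id confined_subst_goal_id simp: vars_clause_Cl)
  obtain \<theta>' where good': "good_mgu \<theta>' (set (subst_pairs \<sigma> (zip ts us)))"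
    and succ': "succeeds P (subst_goal \<theta>' (subst_goal \<sigma> (B @ R))) m k"
    by (rule succeeds_mgu_swap[OF _ \<sigma>' good_mgu_is_mgu[OF good], of "zip ts us" P "B @ R"])
      (use atom_step_res succ good_mgu_is_mgu in auto)
  have "vars_goal (subst_goal \<sigma> (Pred p ts # R)) \<subseteq> vars_atom (Pred p ts) \<union> vars_goal (R @ eqs_goal L)"
    using confined_vars_subst_goal[OF confined, of "Pred p ts # R"] by auto
  then have "vars_clause (Cl p us B) \<inter>
      (vars_atom (Pred p (map (subst_trm \<sigma>) ts)) \<union> vars_goal (subst_goal \<sigma> R)) = {}"
    using atom_step_res(6) by (simp only: subst_goal_Cons vars_goal_Cons subst_atom.simps) blast
  then have "atom_step P (Pred p (map (subst_trm \<sigma>) ts)) (vars_goal (subst_goal \<sigma> R)) (subst_goal \<theta>' B) \<theta>'"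
    by (rule atom_step.atom_step_res[OF atom_step_res(3-5)])
      (use atom_step_res(7) good' us in \<open>simp_all add: subst_pairs_zip\<close>)
  from succeeds_ConsI[OF this] show ?thesis using succ' B atom_step_res(1) by simp
qed

lemma succeeds_eqs_Cons_I:
  assumes step: "atom_step P A (vars_goal (R @ eqs_goal L)) X \<theta>"
    and succ: "succeeds P (eqs_goal (subst_pairs \<theta> L) @ X @ subst_goal \<theta> R) n k"
    and neq: "is_neq A \<longrightarrow> vars_atom A \<inter> vars_pairs (set L) = {}"
  shows "succeeds P (eqs_goal L @ A # R) (Suc n) (k + (if nonbasic A then 1 else 0))"
proof -
  obtain \<sigma>' where \<sigma>': "is_mgu \<sigma>' (set (subst_pairs \<theta> L))" and len: "length L \<le> n"
    and succ': "succeeds P (subst_goal \<sigma>' (X @ subst_goal \<theta> R)) (n - length L) k"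
    using succeeds_eqs_D[OF succ] by auto
  obtain \<sigma> where good: "good_mgu \<sigma> (set L)"
    using good_mgu_exists is_mgu_unifier[OF \<sigma>'] by (metis unifier_subst_pairs)
  from succeeds_subst_ConsI[OF good neq step \<sigma>' succ']
  have "succeeds P (eqs_goal L @ A # R) (Suc (n - length L) + length L) (k + (if nonbasic A then 1 else 0))"
    using succeeds_eqs_I[OF good_mgu_is_mgu[OF good], of P "A # R"] by (simp only: subst_goal_Cons)
  then show ?thesis using len by (simp add: Suc_diff_le)
qed

lemma succeeds_subst_ConsD_res:
  fixes P :: "('p, 'f, 'v) program"
  assumes inf: "infinite (UNIV :: 'v set)" and good: "good_mgu \<sigma> (set L)"
    and step: "atom_step P (Pred p (map (subst_trm \<sigma>) ts)) (vars_goal (subst_goal \<sigma> R)) X' \<theta>'"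
    and succ: "succeeds P (X' @ subst_goal \<theta>' (subst_goal \<sigma> R)) m k"
  obtains X \<theta> where "atom_step P (Pred p ts) (vars_goal (R @ eqs_goal L)) X \<theta>"
    "succeeds P (eqs_goal (subst_pairs \<theta> L) @ X @ subst_goal \<theta> R) (m + length L) k"
proof -
  from step obtain C0 \<rho> us B where C0: "C0 \<in> P" "bij \<rho>" "rename_clause \<rho> C0 = Cl p us B"
    "vars_clause (Cl p us B) \<inter> (vars_atom (Pred p (map (subst_trm \<sigma>) ts)) \<union> vars_goal (subst_goal \<sigma> R)) = {}"
    "length (map (subst_trm \<sigma>) ts) = length us" "good_mgu \<theta>' (set (zip (map (subst_trm \<sigma>) ts) us))"
    and X': "X' = subst_goal \<theta>' B"
    by (auto elim!: atom_step.cases)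
  \<comment> \<open>The renamed clause must also avoid the variables of \<open>L\<close>, which the given step need not do.\<close>
  obtain \<rho>2 us2 B2 \<theta>2 where C2: "bij \<rho>2" "rename_clause \<rho>2 C0 = Cl p us2 B2"
    and fresh: "vars_clause (Cl p us2 B2) \<inter> (vars_atom (Pred p (map (subst_trm \<sigma>) ts)) \<union>
      vars_goal (subst_goal \<sigma> R) \<union> vars_goal (Pred p ts # R @ eqs_goal L)) = {}"
    and len2: "length ts = length us2" and good2: "good_mgu \<theta>2 (set (zip (map (subst_trm \<sigma>) ts) us2))"
    and succ2: "succeeds P (subst_goal \<theta>2 (B2 @ subst_goal \<sigma> R)) m k"
    by (rule succeeds_res_fresh[OF inf C0 _ finite_vars_goal[of "Pred p ts # R @ eqs_goal L"]])
      (use succ X' in auto)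
  have "vars_clause (Cl p us2 B2) \<inter> vars_pairs (set L) = {}" using fresh by auto
  then have "map (subst_trm \<sigma>) us2 = us2" and B2: "subst_goal \<sigma> B2 = B2"
    using good_mgu_confined[OF good]
    by (auto intro!: map_idI confined_subst_trm_id confined_subst_goal_id simp: vars_clause_Cl)
  then have good2': "good_mgu \<theta>2 (set (subst_pairs \<sigma> (zip ts us2)))"
    using good2 by (simp add: subst_pairs_zip)
  then obtain \<theta> where good\<theta>: "good_mgu \<theta> (set (zip ts us2))"
    using good_mgu_exists[of "subst_comp \<sigma> \<theta>2"] is_mgu_unifier[OF good_mgu_is_mgu]
    by (metis unifier_subst_pairs)
  obtain \<sigma>'' where "good_mgu \<sigma>'' (set (subst_pairs \<theta> L))"
    "succeeds P (subst_goal \<sigma>'' (subst_goal \<theta> (B2 @ R))) m k"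
    by (rule succeeds_mgu_swap[OF good_mgu_is_mgu[OF good] good_mgu_is_mgu[OF good2'], of \<theta> P "B2 @ R"])
      (use good\<theta> succ2 B2 good_mgu_is_mgu in auto)
  moreover have "atom_step P (Pred p ts) (vars_goal (R @ eqs_goal L)) (subst_goal \<theta> B2) \<theta>"
    using atom_step_res[OF C0(1) C2 _ len2 good\<theta>] fresh by auto
  ultimately show ?thesis using that succeeds_eqs_I[OF good_mgu_is_mgu] by fastforce
qed

lemma succeeds_subst_ConsD:
  fixes P :: "('p, 'f, 'v) program"
  assumes inf: "infinite (UNIV :: 'v set)" and good: "good_mgu \<sigma> (set L)"
    and neq: "is_neq A \<longrightarrow> vars_atom A \<inter> vars_pairs (set L) = {}"
    and step: "atom_step P (subst_atom \<sigma> A) (vars_goal (subst_goal \<sigma> R)) X' \<theta>'"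
    and succ: "succeeds P (X' @ subst_goal \<theta>' (subst_goal \<sigma> R)) m k"
  obtains X \<theta> where "atom_step P A (vars_goal (R @ eqs_goal L)) X \<theta>"
    "succeeds P (eqs_goal (subst_pairs \<theta> L) @ X @ subst_goal \<theta> R) (m + length L) k"
proof (cases A)
  case (Eq t1 t2)
  from step Eq have X': "X' = []" and good': "good_mgu \<theta>' (set (subst_pairs \<sigma> [(t1, t2)]))"
    by (auto elim: atom_step.cases)
  then obtain \<theta> where good\<theta>: "good_mgu \<theta> {(t1, t2)}"
    using good_mgu_exists[of "subst_comp \<sigma> \<theta>'" "[(t1, t2)]"] is_mgu_unifier[OF good_mgu_is_mgu]
    by (metis empty_set list.simps(15) unifier_subst_pairs)
  obtain \<sigma>'' where "good_mgu \<sigma>'' (set (subst_pairs \<theta> L))" "succeeds P (subst_goal \<sigma>'' (subst_goal \<theta> R)) m k"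
    by (rule succeeds_mgu_swap[OF good_mgu_is_mgu[OF good] good_mgu_is_mgu[OF good'], of \<theta> P R])
      (use good\<theta> succ X' good_mgu_is_mgu in auto)
  then show ?thesis
    using that succeeds_eqs_I[OF good_mgu_is_mgu] atom_step_eq[OF good\<theta>] Eq by fastforce
next
  case (Neq t1 t2)
  have "subst_atom \<sigma> A = A"
    using neq Neq by (intro confined_subst_atom_id[OF good_mgu_confined[OF good]]) auto
  with step Neq have "X' = []" "\<theta>' = Var" "\<not> (\<exists>\<sigma>. subst_trm \<sigma> t1 = subst_trm \<sigma> t2)"
    by (auto elim: atom_step.cases)
  then show ?thesis
    using that succeeds_eqs_I[OF good_mgu_is_mgu[OF good]] succ atom_step_neq Neq by fastforce
next
  case (Pred p ts)
  then show ?thesis using succeeds_subst_ConsD_res[OF inf good _ succ] step that by auto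
qed

lemma succeeds_eqs_Cons_D:
  fixes P :: "('p, 'f, 'v) program"
  assumes inf: "infinite (UNIV :: 'v set)"
    and succ: "succeeds P (eqs_goal L @ A # R) n k"
    and neq: "is_neq A \<longrightarrow> vars_atom A \<inter> vars_pairs (set L) = {}"
  obtains n' k' X \<theta> where "n = Suc n'" "k = k' + (if nonbasic A then 1 else 0)"
    "atom_step P A (vars_goal (R @ eqs_goal L)) X \<theta>"
    "succeeds P (eqs_goal (subst_pairs \<theta> L) @ X @ subst_goal \<theta> R) n' k'"
proof -
  obtain \<sigma>0 where \<sigma>0: "is_mgu \<sigma>0 (set L)" and len: "length L \<le> n"
    and succ0: "succeeds P (subst_goal \<sigma>0 (A # R)) (n - length L) k"
    using succeeds_eqs_D[OF succ] by blast
  obtain \<sigma> where good: "good_mgu \<sigma> (set L)" using good_mgu_exists is_mgu_unifier[OF \<sigma>0] by blast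
  from succeeds_mgu_variant[OF \<sigma>0 good_mgu_is_mgu[OF good] succ0] obtain m k' X' \<theta>'
    where m: "n - length L = Suc m" and k: "k = k' + (if nonbasic A then 1 else 0)"
    and step: "atom_step P (subst_atom \<sigma> A) (vars_goal (subst_goal \<sigma> R)) X' \<theta>'"
    and succ': "succeeds P (X' @ subst_goal \<theta>' (subst_goal \<sigma> R)) m k'"
    by (auto simp: succeeds_Cons_iff)
  obtain X \<theta> where "atom_step P A (vars_goal (R @ eqs_goal L)) X \<theta>"
    "succeeds P (eqs_goal (subst_pairs \<theta> L) @ X @ subst_goal \<theta> R) (m + length L) k'"
    by (rule succeeds_subst_ConsD[OF inf good neq step succ'])
  moreover have "n = Suc (m + length L)" using m len by simp
  ultimately show ?thesis using that k by blast
qed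

lemma succeeds_eqs_Cons_iff:
  fixes P :: "('p, 'f, 'v) program"
  assumes "infinite (UNIV :: 'v set)"
    and "is_neq A \<longrightarrow> vars_atom A \<inter> vars_pairs (set L) = {}"
  shows "succeeds P (eqs_goal L @ A # R) n k \<longleftrightarrow>
    (\<exists>n' k' X \<theta>. n = Suc n' \<and> k = k' + (if nonbasic A then 1 else 0) \<and>
      atom_step P A (vars_goal (R @ eqs_goal L)) X \<theta> \<and>
      succeeds P (eqs_goal (subst_pairs \<theta> L) @ X @ subst_goal \<theta> R) n' k')"
proof
  assume "succeeds P (eqs_goal L @ A # R) n k"
  then show "\<exists>n' k' X \<theta>. n = Suc n' \<and> k = k' + (if nonbasic A then 1 else 0) \<and>
      atom_step P A (vars_goal (R @ eqs_goal L)) X \<theta> \<and>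
      succeeds P (eqs_goal (subst_pairs \<theta> L) @ X @ subst_goal \<theta> R) n' k'"
    by (rule succeeds_eqs_Cons_D[OF assms(1) _ assms(2)]) auto
qed (auto intro: succeeds_eqs_Cons_I[OF _ _ assms(2)])

lemma succeeds_swap_eqs:
  fixes P :: "('p, 'f, 'v) program"
  assumes safe: "safe_prog M P" and inf: "infinite (UNIV :: 'v set)"
    and "neqs_isolated G0 G1 L G2" and "derivs_consistent M P (G0 @ G1)"
  shows "succeeds P (G0 @ G1 @ eqs_goal L @ G2) n k \<longleftrightarrow> succeeds P (G0 @ eqs_goal L @ G1 @ G2) n k"
  using assms(3,4)
proof (induction n arbitrary: G0 G1 L G2 k rule: less_induct)
  case (less n)
  consider (G0) A G0' where "G0 = A # G0'" | (G1) A G1' where "G0 = []" "G1 = A # G1'"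
    | (Nil) "G0 = []" "G1 = []"
    by (metis list.exhaust)
  then show ?case
  proof cases
    case G0
    have IH: "succeeds P (X @ subst_goal \<theta> (G0' @ G1 @ eqs_goal L @ G2)) n' k' \<longleftrightarrow>
        succeeds P (X @ subst_goal \<theta> (G0' @ eqs_goal L @ G1 @ G2)) n' k'"
      if "n = Suc n'" and step: "atom_step P A (vars_goal (G0' @ G1 @ eqs_goal L @ G2)) X \<theta>" for n' k' X \<theta>
    proof -
      have "atom_step P A (vars_goal (G0' @ G1)) X \<theta>" by (rule atom_step_mono[OF step]) auto
      then have "step P (A # G0' @ G1) (X @ subst_goal \<theta> (G0' @ G1))"
        unfolding step_Cons_iff by blast
      then have cons: "derivs_consistent M P ((X @ subst_goal \<theta> G0') @ subst_goal \<theta> G1)"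
        using derivs_consistent_step less.prems(2) G0 by simp
      have iso: "neqs_isolated (X @ subst_goal \<theta> G0') (subst_goal \<theta> G1) (subst_pairs \<theta> L) (subst_goal \<theta> G2)"
        using neqs_isolated_step[OF _ step] less.prems(1) G0 by auto
      have "succeeds P ((X @ subst_goal \<theta> G0') @ subst_goal \<theta> G1 @ eqs_goal (subst_pairs \<theta> L) @ subst_goal \<theta> G2) n' k'
          \<longleftrightarrow> succeeds P ((X @ subst_goal \<theta> G0') @ eqs_goal (subst_pairs \<theta> L) @ subst_goal \<theta> G1 @ subst_goal \<theta> G2) n' k'"
        by (rule less.IH[OF _ iso cons]) (simp add: \<open>n = Suc n'\<close>)
      then show ?thesis by simp
    qed
    have vars: "vars_goal (G0' @ eqs_goal L @ G1 @ G2) = vars_goal (G0' @ G1 @ eqs_goal L @ G2)" by auto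
    show ?thesis unfolding G0 append_Cons succeeds_Cons_iff vars using IH by (intro iff_exI) blast
  next
    case G1
    have iso: "neqs_isolated [] (A # G1') L G2" and cons: "derivs_consistent M P (A # G1')"
      using less.prems G1 by simp_all
    have IH: "succeeds P (X @ subst_goal \<theta> (G1' @ eqs_goal L @ G2)) n' k' \<longleftrightarrow>
        succeeds P (eqs_goal (subst_pairs \<theta> L) @ X @ subst_goal \<theta> (G1' @ G2)) n' k'"
      if "n = Suc n'" and step: "atom_step P A (vars_goal (G1' @ eqs_goal L @ G2)) X \<theta>" for n' k' X \<theta>
    proof -
      have "atom_step P A (vars_goal G1') X \<theta>" by (rule atom_step_mono[OF step]) auto
      then have st: "step P (A # G1') (X @ subst_goal \<theta> G1')"
        unfolding step_Cons_iff by blast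
      then have cons': "derivs_consistent M P ([] @ X @ subst_goal \<theta> G1')"
        using derivs_consistent_step[OF cons] by simp
      have iso': "neqs_isolated [] (X @ subst_goal \<theta> G1') (subst_pairs \<theta> L) (subst_goal \<theta> G2)"
        using neqs_isolated_step_first[OF safe iso step] derivs_consistent_sat_atom[OF cons st] by blast
      have "succeeds P ([] @ (X @ subst_goal \<theta> G1') @ eqs_goal (subst_pairs \<theta> L) @ subst_goal \<theta> G2) n' k'
          \<longleftrightarrow> succeeds P ([] @ eqs_goal (subst_pairs \<theta> L) @ (X @ subst_goal \<theta> G1') @ subst_goal \<theta> G2) n' k'"
        by (rule less.IH[OF _ iso' cons']) (simp add: \<open>n = Suc n'\<close>)
      then show ?thesis by simp
    qed
    have neq: "is_neq A \<longrightarrow> vars_atom A \<inter> vars_pairs (set L) = {}"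
      using iso[unfolded neqs_isolated_def, rule_format, of "[]" _ _ G1'] by (cases A) auto
    have vars: "vars_goal ((G1' @ G2) @ eqs_goal L) = vars_goal (G1' @ eqs_goal L @ G2)" by auto
    show ?thesis
      unfolding G1 append_Nil append_Cons succeeds_Cons_iff succeeds_eqs_Cons_iff[OF inf neq] vars
      using IH by (intro iff_exI) blast
  qed simp
qed

lemma lam_eq_length_filter: "lam ds = length (filter leftmost_nonbasic ds)"
  by (simp add: lam_def length_filter_conv_card)

lemma lam_Cons: "lam (G # ds) = lam ds + (if leftmost_nonbasic G then 1 else 0)"
  by (simp add: lam_eq_length_filter)

lemma successful_deriv_succeeds:
  "successful_deriv P G ds \<Longrightarrow> succeeds P G (length ds - 1) (lam ds)"
proof (induction ds arbitrary: G)
  case (Cons G0 ds)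
  show ?case
  proof (cases ds)
    case Nil
    then show ?thesis using Cons.prems by (auto simp: successful_deriv_def lam_eq_length_filter intro: succeeds_Nil)
  next
    case (Cons G' ds')
    have G: "G0 = G" and "derivation P (G0 # ds)" "last ds = []"
      using Cons.prems \<open>ds = G' # ds'\<close> by (auto simp: successful_deriv_def)
    then have step: "step P G G'" and "successful_deriv P G' ds"
      using \<open>ds = G' # ds'\<close> by (auto simp: successful_deriv_def derivation_Cons_iff)
    from Cons.IH[OF this(2)] have "succeeds P G' (length ds - 1) (lam ds)" .
    from succeeds_step[OF step this] show ?thesis
      using G \<open>ds = G' # ds'\<close> by (simp add: lam_Cons)
  qed
qed (simp add: successful_deriv_def derivation_def)

lemma succeeds_successful_deriv:
  "succeeds P G n k \<Longrightarrow> \<exists>ds. successful_deriv P G ds \<and> length ds = Suc n \<and> lam ds = k"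
proof (induction rule: succeeds.induct)
  case succeeds_Nil
  have "successful_deriv P [] [[]]" by (simp add: successful_deriv_def derivation_def)
  then show ?case by (intro exI[of _ "[[]]"]) (simp add: lam_eq_length_filter)
next
  case (succeeds_step G G' n k)
  then obtain ds where ds: "successful_deriv P G' ds" "length ds = Suc n" "lam ds = k" by blast
  then have "successful_deriv P G (G # ds)"
    using succeeds_step.hyps(1) by (auto simp: successful_deriv_def derivation_Cons_iff)
  then show ?case using ds by (intro exI[of _ "G # ds"]) (simp add: lam_Cons)
qed

lemma steps_Nil_iff_succeeds: "steps P G [] \<longleftrightarrow> (\<exists>n k. succeeds P G n k)"
proof
  assume "steps P G []"
  then show "\<exists>n k. succeeds P G n k"
    by (induction rule: converse_rtranclp_induct) (auto intro: succeeds.intros)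
next
  assume "\<exists>n k. succeeds P G n k"
  then obtain n k where "succeeds P G n k" by blast
  then show "steps P G []"
    by (induction rule: succeeds.induct) (auto intro: converse_rtranclp_into_rtranclp)
qed

lemma mu_succeeds: "mu P G = Inf (enat ` {k. \<exists>n. succeeds P G n k})"
proof -
  have "(\<lambda>ds. enat (lam ds)) ` {ds. successful_deriv P G ds} = enat ` {k. \<exists>n. succeeds P G n k}"
  proof
    show "(\<lambda>ds. enat (lam ds)) ` {ds. successful_deriv P G ds} \<subseteq> enat ` {k. \<exists>n. succeeds P G n k}"
      using successful_deriv_succeeds by blast
    show "enat ` {k. \<exists>n. succeeds P G n k} \<subseteq> (\<lambda>ds. enat (lam ds)) ` {ds. successful_deriv P G ds}"
      using succeeds_successful_deriv by (fastforce simp: image_iff)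
  qed
  then show ?thesis by (simp add: mu_def)
qed

lemma nu_succeeds: "nu P G = Inf (enat ` {n. \<exists>k. succeeds P G n k})"
proof -
  have "(\<lambda>ds. enat (length ds - 1)) ` {ds. successful_deriv P G ds} = enat ` {n. \<exists>k. succeeds P G n k}"
  proof
    show "(\<lambda>ds. enat (length ds - 1)) ` {ds. successful_deriv P G ds} \<subseteq> enat ` {n. \<exists>k. succeeds P G n k}"
      using successful_deriv_succeeds by blast
    show "enat ` {n. \<exists>k. succeeds P G n k} \<subseteq> (\<lambda>ds. enat (length ds - 1)) ` {ds. successful_deriv P G ds}"
    proof
      fix x assume "x \<in> enat ` {n. \<exists>k. succeeds P G n k}"
      then obtain n k where "x = enat n" "succeeds P G n k" by blast
      then show "x \<in> (\<lambda>ds. enat (length ds - 1)) ` {ds. successful_deriv P G ds}"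
        using succeeds_successful_deriv by force
    qed
  qed
  then show ?thesis by (simp add: nu_def)
qed

theorem lemma7:
  fixes P :: "('p, 'f, 'v) program" and M :: "'p mode"
    and Eqs G0 G1 G2 :: "('p, 'f, 'v) goal"
  assumes "infinite (UNIV :: 'v set)"
    and "mode_for M P"
    and "safe_prog M P"
    and "prog_satisfies P M"
    and "\<forall>a\<in>set Eqs. is_eq a"
    and "\<forall>a\<in>set G1. \<not> is_neq a"
    and "\<forall>ds. derivation P ds \<and> hd ds = G0 @ G1 \<longrightarrow> consistent M ds"
  shows "(steps P (G0 @ G1 @ Eqs @ G2) [] \<longleftrightarrow> steps P (G0 @ Eqs @ G1 @ G2) [])
    \<and> mu P (G0 @ G1 @ Eqs @ G2) = mu P (G0 @ Eqs @ G1 @ G2)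
    \<and> nu P (G0 @ G1 @ Eqs @ G2) = nu P (G0 @ Eqs @ G1 @ G2)"
proof -
  obtain L where Eqs: "Eqs = eqs_goal L" using ex_eqs_goal[OF assms(5)] by blast
  have "neqs_isolated G0 G1 L G2" using assms(6) by (rule neqs_isolated_no_neqs)
  moreover have "derivs_consistent M P (G0 @ G1)" using assms(7) by (simp add: derivs_consistent_def)
  ultimately have swap: "succeeds P (G0 @ G1 @ Eqs @ G2) n k \<longleftrightarrow> succeeds P (G0 @ Eqs @ G1 @ G2) n k"
    for n k unfolding Eqs by (rule succeeds_swap_eqs[OF assms(3,1)])
  show ?thesis unfolding steps_Nil_iff_succeeds mu_succeeds nu_succeeds swap by simp
qed

end
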